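(* Let $u\colon B_1\subset\mathbb{R}^d\to\mathbb{R}$ be infinity-harmonic, i.e. a viscosity solution of $\Delta_\infty u=0$ in $B_1$. Assume $u$ is a function of separable variables, i.e. $$u(X)=\sigma_1(x_1)+\sigma_2(x_2)+\cdots+\sigma_d(x_d),\qquad X=(x_1,\dots,x_d),$$ for continuous real functions $\sigma_i$. Then $u\in C^{1,\frac13}(B_{1/2})$.
   Context: The infinity-Laplacian is $\Delta_\infty v:=\sum_{i,j}v_{x_i}v_{x_j}v_{x_ix_j}=(\nabla v)^t D^2v\,\nabla v$; solutions are understood in the viscosity sense. $B_r$ is the ball of radius $r$ centered at the origin. *)

theory Defs
  imports "HOL-Analysis.Analysis"
begin

definition C2_on :: "(real^'n) set \<Rightarrow> (real^'n \<Rightarrow> real)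
    \<Rightarrow> (real^'n \<Rightarrow> real^'n) \<Rightarrow> (real^'n \<Rightarrow> real^'n^'n) \<Rightarrow> bool" where
  "C2_on S \<phi> g H \<longleftrightarrow>
     (\<forall>x\<in>S. (\<phi> has_derivative (\<lambda>h. g x \<bullet> h)) (at x)) \<and>
     (\<forall>x\<in>S. (g has_derivative (\<lambda>h. H x *v h)) (at x)) \<and>
     continuous_on S H"

definition inf_lap :: "real^'n \<Rightarrow> real^'n^'n \<Rightarrow> real" where
  "inf_lap p X = p \<bullet> (X *v p)"

definition inf_harmonic :: "(real^'n) set \<Rightarrow> (real^'n \<Rightarrow> real) \<Rightarrow> bool" where
  "inf_harmonic S u \<longleftrightarrow>
     continuous_on S u \<and>
     (\<forall>\<phi> g H x0. C2_on S \<phi> g H \<and> x0 \<in> S \<and>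
        (\<exists>r>0. \<forall>x\<in>S \<inter> ball x0 r. u x - \<phi> x \<le> u x0 - \<phi> x0)
        \<longrightarrow> inf_lap (g x0) (H x0) \<ge> 0) \<and>
     (\<forall>\<phi> g H x0. C2_on S \<phi> g H \<and> x0 \<in> S \<and>
        (\<exists>r>0. \<forall>x\<in>S \<inter> ball x0 r. u x - \<phi> x \<ge> u x0 - \<phi> x0)
        \<longrightarrow> inf_lap (g x0) (H x0) \<le> 0)"

definition C1_alpha_on :: "real \<Rightarrow> (real^'n) set \<Rightarrow> (real^'n \<Rightarrow> real) \<Rightarrow> bool" where
  "C1_alpha_on \<alpha> S u \<longleftrightarrow>
     (\<exists>g C. (\<forall>x\<in>S. (u has_derivative (\<lambda>h. g x \<bullet> h)) (at x)) \<and>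
            (\<forall>x\<in>S. \<forall>y\<in>S. norm (g x - g y) \<le> C * dist x y powr \<alpha>))"

end

theory Submission
  imports Defs
begin

text \<open>Separability reduces the equation to one dimension. Testing \<open>u\<close> with separable quadratic
  polynomials shows that, for every coordinate \<open>i\<close>, parabolas touching \<open>\<sigma>\<^sub>i\<close> from above have
  \<open>p\<^sup>2 X \<ge> c\<^sub>i\<close> and parabolas touching from below have \<open>p\<^sup>2 X \<le> c\<^sub>i\<close>, for one constant \<open>c\<^sub>i\<close>.
  For this the other coordinates must be touched from both sides with almost equal \<open>p\<^sup>2 X\<close>;
  that is possible for every continuous function, because a uniform gap would make it a
  solution of the one-dimensional equation, and solutions can be touched with values
  arbitrarily close to their constant. Thus \<open>\<sigma>\<^sub>i\<close> is a viscosity solution of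
  \<open>(\<sigma>')\<^sup>2 \<sigma>'' = c\<^sub>i\<close>. For \<open>c\<^sub>i > 0\<close> it is convex and has no corners, hence it is \<open>C\<^sup>1\<close>, and
  comparison with the explicit solutions \<open>w' = (A + 3ks)\<^sup>1\<^sup>/\<^sup>3\<close> gives \<open>(\<sigma>\<^sub>i')\<^sup>3 = K + 3c\<^sub>i s\<close>
  away from the at most one zero of \<open>\<sigma>\<^sub>i'\<close>, hence everywhere. Finally
  \<open>\<bar>a - b\<bar>\<^sup>3 \<le> 4\<bar>a\<^sup>3 - b\<^sup>3\<bar>\<close> makes each \<open>\<sigma>\<^sub>i'\<close>, and so \<open>\<nabla>u = (\<sigma>\<^sub>i'(x\<^sub>i))\<^sub>i\<close>, Hoelder
  continuous with exponent \<open>1/3\<close>.\<close>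

section \<open>Parabolas touching a function of one variable\<close>

definition touch_above :: "(real \<Rightarrow> real) \<Rightarrow> real set \<Rightarrow> real \<Rightarrow> real \<Rightarrow> real \<Rightarrow> bool" where
  "touch_above f I t p X \<longleftrightarrow> t \<in> I \<and>
     (\<exists>\<eta>>0. \<forall>s. \<bar>s - t\<bar> < \<eta> \<longrightarrow> s \<in> I \<and> f s \<le> f t + p * (s - t) + X / 2 * (s - t)\<^sup>2)"

definition touch_below :: "(real \<Rightarrow> real) \<Rightarrow> real set \<Rightarrow> real \<Rightarrow> real \<Rightarrow> real \<Rightarrow> bool" where
  "touch_below f I t p X \<longleftrightarrow> t \<in> I \<and>
     (\<exists>\<eta>>0. \<forall>s. \<bar>s - t\<bar> < \<eta> \<longrightarrow> s \<in> I \<and> f s \<ge> f t + p * (s - t) + X / 2 * (s - t)\<^sup>2)"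

definition viscosity_subsolution :: "real \<Rightarrow> (real \<Rightarrow> real) \<Rightarrow> real set \<Rightarrow> bool" where
  "viscosity_subsolution c f I \<longleftrightarrow> (\<forall>t p X. touch_above f I t p X \<longrightarrow> c \<le> p\<^sup>2 * X)"

definition viscosity_supersolution :: "real \<Rightarrow> (real \<Rightarrow> real) \<Rightarrow> real set \<Rightarrow> bool" where
  "viscosity_supersolution c f I \<longleftrightarrow> (\<forall>t p X. touch_below f I t p X \<longrightarrow> p\<^sup>2 * X \<le> c)"

lemma touch_above_uminus:
  "touch_above (\<lambda>s. - f s) I t p X \<longleftrightarrow> touch_below f I t (- p) (- X)"
  unfolding touch_above_def touch_below_def
  by (intro conj_cong ex_cong1 all_cong1 imp_cong) (auto simp: algebra_simps)

lemma touch_below_uminus: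
  "touch_below (\<lambda>s. - f s) I t p X \<longleftrightarrow> touch_above f I t (- p) (- X)"
  unfolding touch_above_def touch_below_def
  by (intro conj_cong ex_cong1 all_cong1 imp_cong) (auto simp: algebra_simps)

lemma viscosity_subsolution_uminus:
  "viscosity_subsolution c (\<lambda>s. - f s) I \<longleftrightarrow> viscosity_supersolution (- c) f I"
  unfolding viscosity_subsolution_def viscosity_supersolution_def touch_above_uminus
proof safe
  fix t p X assume "\<forall>t p X. touch_below f I t (- p) (- X) \<longrightarrow> c \<le> p\<^sup>2 * X" "touch_below f I t p X"
  thus "p\<^sup>2 * X \<le> - c" by (metis add.inverse_inverse mult_minus_right neg_le_iff_le power2_minus)
qed force

lemma viscosity_supersolution_uminus:
  "viscosity_supersolution c (\<lambda>s. - f s) I \<longleftrightarrow> viscosity_subsolution (- c) f I"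
  unfolding viscosity_subsolution_def viscosity_supersolution_def touch_below_uminus
proof safe
  fix t p X assume "\<forall>t p X. touch_above f I t (- p) (- X) \<longrightarrow> p\<^sup>2 * X \<le> c" "touch_above f I t p X"
  thus "- c \<le> p\<^sup>2 * X" by (metis add.inverse_inverse mult_minus_right neg_le_iff_le power2_minus)
qed force

lemma viscosity_subsolution_mono:
  "viscosity_subsolution c f I \<Longrightarrow> c' \<le> c \<Longrightarrow> viscosity_subsolution c' f I"
  unfolding viscosity_subsolution_def by force

lemma touch_above_of_max:
  assumes t: "x < t" "t < z" and sub: "{x..z} \<subseteq> I"
    and max: "\<And>s. s \<in> {x..z} \<Longrightarrow> f s - g s \<le> f t - g t"
    and \<eta>: "\<eta> > 0" and g: "\<And>s. \<bar>s - t\<bar> < \<eta> \<Longrightarrow> g s \<le> g t + p * (s - t) + X / 2 * (s - t)\<^sup>2"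
  shows "touch_above f I t p X"
  unfolding touch_above_def
proof (intro conjI exI[of _ "min \<eta> (min (t - x) (z - t))"] allI impI)
  show "t \<in> I" using t sub by auto
  show "min \<eta> (min (t - x) (z - t)) > 0" using t \<eta> by auto
  fix s assume s: "\<bar>s - t\<bar> < min \<eta> (min (t - x) (z - t))"
  hence "s \<in> {x..z}" by auto
  thus "s \<in> I" using sub by auto
  show "f s \<le> f t + p * (s - t) + X / 2 * (s - t)\<^sup>2"
    using max[OF \<open>s \<in> {x..z}\<close>] g[of s] s by auto
qed

lemma exists_touch_above:
  assumes cont: "continuous_on {a<..<b} f" and "a < b"
  shows "\<exists>t p X. touch_above f {a<..<b} t p X"
proof -
  define m e where "m = (a + b) / 2" and "e = (b - a) / 4"
  have e: "e > 0" "a < m - e" "m + e < b" using \<open>a < b\<close> by (auto simp: m_def e_def field_simps)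
  have contJ: "continuous_on {m - e..m + e} f"
    by (rule continuous_on_subset[OF cont]) (use e in auto)
  obtain M where M: "\<And>s. s \<in> {m - e..m + e} \<Longrightarrow> \<bar>f s\<bar> \<le> M"
    using compact_imp_bounded[OF compact_continuous_image[OF contJ compact_Icc]]
    unfolding bounded_iff by fastforce
  define K where "K = (2 * M + 1) / e\<^sup>2"
  have KE: "K * e\<^sup>2 = 2 * M + 1" using e by (simp add: K_def)
  define g where "g s = K * (s - m)\<^sup>2" for s
  have cont_diff: "continuous_on {m - e..m + e} (\<lambda>s. f s - g s)"
    unfolding g_def using contJ by (intro continuous_intros)
  obtain t where t: "t \<in> {m - e..m + e}" and max: "\<And>s. s \<in> {m - e..m + e} \<Longrightarrow> f s - g s \<le> f t - g t"
    using continuous_attains_sup[OF compact_Icc _ cont_diff] e by auto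
  have "f t - g t \<ge> - M" using max[of m] M[of m] e by (auto simp: g_def)
  moreover have "f (m - e) - g (m - e) < - M" "f (m + e) - g (m + e) < - M"
    using M[of "m - e"] M[of "m + e"] e KE by (auto simp: g_def)
  ultimately have "m - e < t" "t < m + e" using t by (auto simp: le_less)
  moreover have "g s \<le> g t + 2 * K * (t - m) * (s - t) + 2 * K / 2 * (s - t)\<^sup>2" for s
    by (simp add: g_def algebra_simps power2_eq_square)
  ultimately have "touch_above f {a<..<b} t (2 * K * (t - m)) (2 * K)"
    by (intro touch_above_of_max[where g = g and \<eta> = 1]) (use e max in auto)
  thus ?thesis by blast
qed

lemma exists_touch_below:
  assumes "continuous_on {a<..<b} f" and "a < b"
  shows "\<exists>t p X. touch_below f {a<..<b} t p X"
proof -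
  have "continuous_on {a<..<b} (\<lambda>s. - f s)" using assms(1) by (intro continuous_intros)
  then obtain t p X where "touch_above (\<lambda>s. - f s) {a<..<b} t p X"
    using exists_touch_above assms(2) by blast
  thus ?thesis unfolding touch_above_uminus by blast
qed

section \<open>Convexity and differentiability\<close>

text \<open>Subtract the chord from \<open>x\<close> to \<open>z\<close> and add a small concave parabola: the maximum of the
  difference is interior, and there the slope \<open>p\<close> of the touching parabola is nonzero, which
  contradicts \<open>0 \<le> p\<^sup>2 X\<close> for its negative curvature \<open>X\<close>.\<close>

lemma viscosity_subsolution_zero_below_chord:
  assumes sub: "viscosity_subsolution 0 f {a<..<b}" and cont: "continuous_on {a<..<b} f"
    and xyz: "a < x" "x < y" "y < z" "z < b"
  shows "(f y - f x) * (z - x) \<le> (f z - f x) * (y - x)"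
proof (rule ccontr)
  assume above: "\<not> ?thesis"
  define m where "m = (f z - f x) / (z - x)"
  define M where "M = f y - (f x + m * (y - x))"
  have M: "M > 0"
    using above xyz by (simp add: M_def m_def field_simps)
  obtain \<epsilon> where \<epsilon>: "\<epsilon> > 0" "\<epsilon> * (z - x)\<^sup>2 < M" "m > 0 \<Longrightarrow> 2 * \<epsilon> * (z - x) < m"
  proof
    define \<epsilon> where "\<epsilon> = min (M / (2 * (z - x)\<^sup>2)) (if m > 0 then m / (4 * (z - x)) else 1)"
    have "\<epsilon> * (z - x)\<^sup>2 \<le> M / (2 * (z - x)\<^sup>2) * (z - x)\<^sup>2"
      by (intro mult_right_mono) (auto simp: \<epsilon>_def)
    thus "\<epsilon> * (z - x)\<^sup>2 < M" using xyz M by simp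
    show "\<epsilon> > 0" using xyz M by (auto simp: \<epsilon>_def)
    assume "m > 0"
    have "2 * \<epsilon> * (z - x) \<le> 2 * (m / (4 * (z - x))) * (z - x)"
      using xyz \<open>m > 0\<close> by (intro mult_right_mono) (auto simp: \<epsilon>_def)
    also have "\<dots> = m / 2" using xyz by (simp add: field_simps)
    finally show "2 * \<epsilon> * (z - x) < m" using \<open>m > 0\<close> by simp
  qed
  define q where "q s = f x + m * (s - x) - \<epsilon> * (s - x)\<^sup>2" for s
  have cont_diff: "continuous_on {x..z} (\<lambda>s. f s - q s)" unfolding q_def
    by (intro continuous_intros continuous_on_subset[OF cont]) (use xyz in auto)
  obtain t where t: "t \<in> {x..z}" and max: "\<And>s. s \<in> {x..z} \<Longrightarrow> f s - q s \<le> f t - q t"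
    using continuous_attains_sup[OF compact_Icc _ cont_diff] xyz by auto
  have "f t - q t \<ge> M + \<epsilon> * (y - x)\<^sup>2" using max[of y] xyz by (simp add: q_def M_def)
  moreover have "f x - q x = 0" "f z - q z = \<epsilon> * (z - x)\<^sup>2" by (simp_all add: q_def m_def)
  moreover have "\<epsilon> * (y - x)\<^sup>2 \<ge> 0" using \<epsilon>(1) by simp
  ultimately have "f x - q x < f t - q t" "f z - q z < f t - q t" using \<epsilon>(2) M by linarith+
  hence "t \<noteq> x" "t \<noteq> z" by auto
  hence "x < t" "t < z" using t by auto
  moreover have "q s \<le> q t + (m - 2 * \<epsilon> * (t - x)) * (s - t) + - 2 * \<epsilon> / 2 * (s - t)\<^sup>2" for s
    by (simp add: q_def algebra_simps power2_eq_square)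
  ultimately have "touch_above f {a<..<b} t (m - 2 * \<epsilon> * (t - x)) (- 2 * \<epsilon>)"
    by (intro touch_above_of_max[where g = q and \<eta> = 1]) (use xyz max in auto)
  hence "0 \<le> (m - 2 * \<epsilon> * (t - x))\<^sup>2 * (- 2 * \<epsilon>)"
    using sub unfolding viscosity_subsolution_def by blast
  hence m: "m = 2 * \<epsilon> * (t - x)" using \<epsilon>(1) by (simp add: mult_le_0_iff)
  have "2 * \<epsilon> * (t - x) < 2 * \<epsilon> * (z - x)" using \<epsilon>(1) \<open>t < z\<close> by simp
  moreover have "m > 0" using m \<epsilon>(1) \<open>x < t\<close> by simp
  ultimately show False using \<epsilon>(3) m by linarith
qed

lemma viscosity_subsolution_zero_convex_on:
  assumes "viscosity_subsolution 0 f {a<..<b}" and "continuous_on {a<..<b} f"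
  shows "convex_on {a<..<b} f"
proof (rule convex_on_linorderI)
  fix u x y :: real
  assume u: "0 < u" "u < 1" and xy: "x \<in> {a<..<b}" "y \<in> {a<..<b}" "x < y"
  define w where "w = (1 - u) *\<^sub>R x + u *\<^sub>R y"
  have wx: "w - x = u * (y - x)" and yw: "y - w = (1 - u) * (y - x)"
    by (simp_all add: w_def algebra_simps)
  have "0 < u * (y - x)" "0 < (1 - u) * (y - x)" using u xy by simp_all
  hence "x < w" "w < y" unfolding atomize_conj using wx yw by linarith
  hence "(f w - f x) * (y - x) \<le> (f y - f x) * (u * (y - x))"
    using viscosity_subsolution_zero_below_chord[OF assms] xy by (auto simp flip: wx)
  hence "f w - f x \<le> u * (f y - f x)" using xy by (simp add: mult.commute mult.left_commute)
  thus "f w \<le> (1 - u) * f x + u * f y" by (simp add: algebra_simps)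
qed simp

definition slope :: "(real \<Rightarrow> real) \<Rightarrow> real \<Rightarrow> real \<Rightarrow> real" where
  "slope f x y = (f x - f y) / (x - y)"

lemma slope_commute: "slope f x y = slope f y x"
  unfolding slope_def by (metis minus_diff_eq minus_divide_divide)

lemma slope_expand: "x \<noteq> y \<Longrightarrow> f y = f x + slope f x y * (y - x)"
  unfolding slope_def by (simp add: field_simps)

lemma convex_on_slope_mono:
  assumes "convex_on {a<..<b} f" and "a < x" "x < y" "y < z" "z < b"
  shows "slope f x y \<le> slope f x z" "slope f x z \<le> slope f y z"
  using convex_on_slope_le[OF assms(1), of x z y] assms(2-) unfolding slope_def by auto

lemma convex_on_slope_left_le_right:
  assumes "convex_on {a<..<b} f" and "a < w" "w < t" "t < w'" "w' < b"
  shows "slope f t w \<le> slope f t w'"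
  using convex_on_slope_mono[OF assms] by (simp add: slope_commute)

lemma touch_below_of_corner:
  assumes t: "t \<in> {a<..<b}" and \<delta>: "\<delta> > 0" and K: "K > 0"
    and corner: "\<And>s. s \<in> {a<..<b} \<Longrightarrow> f t + p * (s - t) + \<delta> * \<bar>s - t\<bar> \<le> f s"
  shows "touch_below f {a<..<b} t p (2 * K)"
  unfolding touch_below_def
proof (intro conjI exI[of _ "min (\<delta> / K) (min (t - a) (b - t))"] allI impI)
  show "t \<in> {a<..<b}" by (rule t)
  show "min (\<delta> / K) (min (t - a) (b - t)) > 0" using t \<delta> K by auto
  fix s assume s: "\<bar>s - t\<bar> < min (\<delta> / K) (min (t - a) (b - t))"
  thus s_in: "s \<in> {a<..<b}" by auto
  have "K * \<bar>s - t\<bar> \<le> \<delta>" using s K by (simp add: pos_less_divide_eq mult.commute)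
  hence "(K * \<bar>s - t\<bar>) * \<bar>s - t\<bar> \<le> \<delta> * \<bar>s - t\<bar>" by (rule mult_right_mono) simp
  hence "K * (s - t)\<^sup>2 \<le> \<delta> * \<bar>s - t\<bar>" by (simp add: power2_eq_square abs_mult_self_eq mult.assoc)
  thus "f t + p * (s - t) + 2 * K / 2 * (s - t)\<^sup>2 \<le> f s" using corner[OF s_in] by simp
qed

lemma convex_on_right_slopes_bdd_below:
  assumes cv: "convex_on {a<..<b} f" and t: "a < t"
  shows "bdd_below (slope f t ` {t<..<b})"
proof (rule bdd_belowI2)
  fix w assume "w \<in> {t<..<b}"
  thus "slope f t ((a + t) / 2) \<le> slope f t w"
    using t by (intro convex_on_slope_left_le_right[OF cv]) auto
qed

lemma convex_on_left_slopes_bdd_above: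
  assumes cv: "convex_on {a<..<b} f" and t: "t < b"
  shows "bdd_above (slope f t ` {a<..<t})"
proof (rule bdd_aboveI2)
  fix w assume "w \<in> {a<..<t}"
  thus "slope f t w \<le> slope f t ((t + b) / 2)"
    using t by (intro convex_on_slope_left_le_right[OF cv]) auto
qed

lemma convex_on_above_kinked_line:
  assumes cv: "convex_on {a<..<b} f" and t: "t \<in> {a<..<b}" and s: "s \<in> {a<..<b}"
    and left: "Sup (slope f t ` {a<..<t}) \<le> p - \<delta>" and right: "p + \<delta> \<le> Inf (slope f t ` {t<..<b})"
  shows "f t + p * (s - t) + \<delta> * \<bar>s - t\<bar> \<le> f s"
proof (cases s t rule: linorder_cases)
  case less
  hence "slope f t s \<le> p - \<delta>"
    using s t left cSup_upper[OF _ convex_on_left_slopes_bdd_above[OF cv], of "slope f t s" t] by auto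
  hence "(p - \<delta>) * (s - t) \<le> slope f t s * (s - t)" using less by (intro mult_right_mono_neg) auto
  thus ?thesis using less slope_expand[of t s f] by (simp add: algebra_simps)
next
  case greater
  hence "p + \<delta> \<le> slope f t s"
    using s t right cInf_lower[OF _ convex_on_right_slopes_bdd_below[OF cv], of "slope f t s" t] by auto
  hence "(p + \<delta>) * (s - t) \<le> slope f t s * (s - t)" using greater by (intro mult_right_mono) auto
  thus ?thesis using greater slope_expand[of t s f] by (simp add: algebra_simps)
qed simp

text \<open>A convex supersolution has no corners: a gap between left and right slopes would leave room
  for a nonzero slope \<open>p\<close> at which \<open>f\<close> is touched from below with arbitrarily large \<open>p\<^sup>2 X\<close>.\<close>

lemma convex_supersolution_no_corner:
  assumes cv: "convex_on {a<..<b} f" and sup: "viscosity_supersolution c f {a<..<b}"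
    and t: "t \<in> {a<..<b}"
  shows "Sup (slope f t ` {a<..<t}) = Inf (slope f t ` {t<..<b})"
proof -
  let ?L = "slope f t ` {a<..<t}" and ?R = "slope f t ` {t<..<b}"
  have "Sup ?L \<le> Inf ?R"
  proof (rule cSup_least)
    fix l assume "l \<in> ?L"
    thus "l \<le> Inf ?R" using t convex_on_slope_left_le_right[OF cv] by (intro cInf_greatest) auto
  qed (use t in auto)
  moreover have "\<not> Sup ?L < Inf ?R"
  proof
    assume lt: "Sup ?L < Inf ?R"
    obtain p1 where p1: "Sup ?L < p1" "p1 < Inf ?R" using dense[OF lt] by blast
    obtain p2 where p2: "p1 < p2" "p2 < Inf ?R" using dense[OF p1(2)] by blast
    define p where "p = (if p1 = 0 then p2 else p1)"
    have p: "Sup ?L < p" "p < Inf ?R" "p \<noteq> 0" using p1 p2 by (auto simp: p_def)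
    define \<delta> where "\<delta> = min (Inf ?R - p) (p - Sup ?L)"
    have "touch_below f {a<..<b} t p (2 * ((\<bar>c\<bar> + 1) / p\<^sup>2))"
      using p convex_on_above_kinked_line[OF cv t, of _ p \<delta>]
      by (intro touch_below_of_corner[OF t, of \<delta>]) (auto simp: \<delta>_def)
    hence "p\<^sup>2 * (2 * ((\<bar>c\<bar> + 1) / p\<^sup>2)) \<le> c" using sup unfolding viscosity_supersolution_def by blast
    thus False using p(3) by simp
  qed
  ultimately show ?thesis by simp
qed

definition right_deriv :: "(real \<Rightarrow> real) \<Rightarrow> real \<Rightarrow> real \<Rightarrow> real" where
  "right_deriv f b t = Inf (slope f t ` {t<..<b})"

lemma right_deriv_le_slope:
  assumes cv: "convex_on {a<..<b} f" and "a < s" "s < t" "t < b"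
  shows "right_deriv f b s \<le> slope f s t"
  unfolding right_deriv_def
  using assms by (intro cInf_lower convex_on_right_slopes_bdd_below[OF cv]) auto

lemma slope_le_right_deriv:
  assumes cv: "convex_on {a<..<b} f" and sup: "viscosity_supersolution c f {a<..<b}"
    and "a < s" "s < t" "t < b"
  shows "slope f s t \<le> right_deriv f b t"
proof -
  have "slope f t s \<le> Sup (slope f t ` {a<..<t})"
    using assms by (intro cSup_upper convex_on_left_slopes_bdd_above[OF cv]) auto
  thus ?thesis
    using convex_supersolution_no_corner[OF cv sup, of t] assms
    by (simp add: right_deriv_def slope_commute)
qed

lemma right_deriv_mono:
  assumes cv: "convex_on {a<..<b} f" and sup: "viscosity_supersolution c f {a<..<b}"
    and "a < s" "s \<le> t" "t < b"
  shows "right_deriv f b s \<le> right_deriv f b t"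
proof (cases "s = t")
  case False
  thus ?thesis using right_deriv_le_slope[OF cv] slope_le_right_deriv[OF cv sup] assms
    by (meson order.trans order_le_less)
qed simp

lemma right_deriv_approx_right:
  assumes cv: "convex_on {a<..<b} f" and t: "t \<in> {a<..<b}" and e: "e > 0"
  obtains t2 where "t < t2" "t2 < b" "slope f t t2 < right_deriv f b t + e"
proof -
  have "\<exists>y\<in>slope f t ` {t<..<b}. y < right_deriv f b t + e"
    using e t by (subst cInf_less_iff[symmetric])
      (auto simp: right_deriv_def intro: convex_on_right_slopes_bdd_below[OF cv])
  thus ?thesis using that by auto
qed

lemma right_deriv_approx_left:
  assumes cv: "convex_on {a<..<b} f" and sup: "viscosity_supersolution c f {a<..<b}"
    and t: "t \<in> {a<..<b}" and e: "e > 0"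
  obtains t0 where "a < t0" "t0 < t" "right_deriv f b t - e < slope f t0 t"
proof -
  have "\<exists>y\<in>slope f t ` {a<..<t}. right_deriv f b t - e < y"
    using e t convex_supersolution_no_corner[OF cv sup t]
    by (subst less_cSup_iff[symmetric])
      (auto simp: right_deriv_def intro: convex_on_left_slopes_bdd_above[OF cv])
  thus ?thesis using that by (auto simp: slope_commute)
qed

text \<open>Right continuity: \<open>right_deriv f b s \<le> slope f s t\<^sub>2\<close>, which tends to \<open>slope f t t\<^sub>2\<close>
  as \<open>s \<rightarrow> t\<close>; left continuity symmetrically, using the absence of corners.\<close>

lemma right_deriv_isCont:
  assumes cv: "convex_on {a<..<b} f" and sup: "viscosity_supersolution c f {a<..<b}"
    and t: "t \<in> {a<..<b}"
  shows "isCont (right_deriv f b) t"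
  unfolding isCont_def
proof (rule tendstoI)
  let ?v = "right_deriv f b"
  fix e :: real assume e: "e > 0"
  have fc: "isCont f s" if "s \<in> {a<..<b}" for s
    using convex_on_continuous[OF open_greaterThanLessThan cv] that
    by (simp add: continuous_on_eq_continuous_at)
  obtain t2 where t2: "t < t2" "t2 < b" "slope f t t2 < ?v t + e"
    using right_deriv_approx_right[OF cv t e] .
  obtain t0 where t0: "a < t0" "t0 < t" "?v t - e < slope f t0 t"
    using right_deriv_approx_left[OF cv sup t e] .
  have "isCont (\<lambda>s. slope f s t2) t" "isCont (\<lambda>s. slope f t0 s) t"
    unfolding slope_def using fc t t0 t2 by (auto intro!: continuous_intros)
  hence "\<forall>\<^sub>F s in at t. slope f s t2 < ?v t + e" "\<forall>\<^sub>F s in at t. ?v t - e < slope f t0 s"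
    using t0(3) t2(3) by (auto simp: isCont_def intro: order_tendstoD)
  moreover have "\<forall>\<^sub>F s in at t. s \<in> {t0<..<t2}"
    using t0 t2 by (intro eventually_at_in_open') auto
  ultimately show "\<forall>\<^sub>F s in at t. dist (?v s) (?v t) < e"
  proof eventually_elim
    case (elim s)
    consider "s < t" | "s = t" | "t < s" by linarith
    thus ?case
    proof cases
      case 1
      have "slope f t0 s \<le> ?v s" "?v s \<le> ?v t"
        using 1 elim t0 t by (auto intro: slope_le_right_deriv[OF cv sup] right_deriv_mono[OF cv sup])
      thus ?thesis using elim by (simp add: dist_real_def)
    next
      case 3
      have "?v s \<le> slope f s t2" "?v t \<le> ?v s"
        using 3 elim t2 t by (auto intro: right_deriv_le_slope[OF cv] right_deriv_mono[OF cv sup])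
      thus ?thesis using elim by (simp add: dist_real_def)
    qed (simp add: e)
  qed
qed

lemma convex_supersolution_has_derivative:
  assumes cv: "convex_on {a<..<b} f" and sup: "viscosity_supersolution c f {a<..<b}"
    and t: "t \<in> {a<..<b}"
  shows "(f has_real_derivative right_deriv f b t) (at t)"
  unfolding has_field_derivative_iff
proof (rule tendsto_sandwich)
  let ?v = "right_deriv f b"
  have lim: "(?v \<longlongrightarrow> ?v t) (at t)" using right_deriv_isCont[OF cv sup t] by (simp add: isCont_def)
  show "((\<lambda>s. min (?v s) (?v t)) \<longlongrightarrow> ?v t) (at t)" "((\<lambda>s. max (?v s) (?v t)) \<longlongrightarrow> ?v t) (at t)"
    using tendsto_min[OF lim tendsto_const[of "?v t"]] tendsto_max[OF lim tendsto_const[of "?v t"]]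
    by simp_all
  have between: "min (?v s) (?v t) \<le> (f s - f t) / (s - t) \<and> (f s - f t) / (s - t) \<le> max (?v s) (?v t)"
    if s: "s \<in> {a<..<b} - {t}" for s
  proof -
    have q: "(f s - f t) / (s - t) = slope f s t" by (simp add: slope_def)
    consider "s < t" | "t < s" using s by force
    thus ?thesis
    proof cases
      case 1
      thus ?thesis using s t q slope_le_right_deriv[OF cv sup, of s t] right_deriv_le_slope[OF cv, of s t]
        by auto
    next
      case 2
      thus ?thesis using s t q slope_le_right_deriv[OF cv sup, of t s] right_deriv_le_slope[OF cv, of t s]
        by (auto simp: slope_commute)
    qed
  qed
  have "\<forall>\<^sub>F s in at t. s \<in> {a<..<b} - {t}" using t by (intro eventually_at_in_open) auto
  thus "\<forall>\<^sub>F s in at t. min (?v s) (?v t) \<le> (f s - f t) / (s - t)"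
    "\<forall>\<^sub>F s in at t. (f s - f t) / (s - t) \<le> max (?v s) (?v t)"
    by (auto elim!: eventually_mono simp: between)
qed

section \<open>Comparison with cube-root profiles\<close>

lemma second_order_upper_bound:
  fixes g :: "real \<Rightarrow> real"
  assumes \<eta>0: "\<eta>0 > 0"
    and d1: "\<And>s. \<bar>s - t\<bar> < \<eta>0 \<Longrightarrow> (g has_real_derivative g' s) (at s)"
    and d2: "\<And>s. \<bar>s - t\<bar> < \<eta>0 \<Longrightarrow> (g' has_real_derivative g'' s) (at s)"
    and cont: "isCont g'' t" and X: "g'' t < X"
  shows "\<exists>\<eta>>0. \<forall>s. \<bar>s - t\<bar> < \<eta> \<longrightarrow> g s \<le> g t + g' t * (s - t) + X / 2 * (s - t)\<^sup>2"
proof -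
  obtain \<eta>1 where \<eta>1: "\<eta>1 > 0" "\<And>s. dist s t < \<eta>1 \<Longrightarrow> dist (g'' s) (g'' t) < X - g'' t"
    using cont[unfolded continuous_at_eps_delta] X by (meson diff_gt_0_iff_gt)
  define \<eta> where "\<eta> = min \<eta>0 \<eta>1 / 2"
  have \<eta>: "\<eta> > 0" "\<eta> < \<eta>0" "\<eta> < \<eta>1" using \<eta>0 \<eta>1 by (auto simp: \<eta>_def)
  define diff where "diff m = (if m = 0 then g else if m = 1 then g' else g'')" for m :: nat
  have D: "\<forall>m s. m < 2 \<and> t - \<eta> \<le> s \<and> s \<le> t + \<eta> \<longrightarrow> (diff m has_real_derivative diff (Suc m) s) (at s)"
  proof (intro allI impI)
    fix m :: nat and s :: real assume ms: "m < 2 \<and> t - \<eta> \<le> s \<and> s \<le> t + \<eta>"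
    hence "\<bar>s - t\<bar> < \<eta>0" using \<eta> by auto
    thus "(diff m has_real_derivative diff (Suc m) s) (at s)"
      using ms d1 d2 by (cases "m = 0") (auto simp: diff_def)
  qed
  have "g s \<le> g t + g' t * (s - t) + X / 2 * (s - t)\<^sup>2" if s: "\<bar>s - t\<bar> < \<eta>" for s
  proof (cases "s = t")
    case False
    have "\<exists>\<xi>. (if s < t then s < \<xi> \<and> \<xi> < t else t < \<xi> \<and> \<xi> < s) \<and>
        g s = (\<Sum>m<2. diff m t / fact m * (s - t) ^ m) + diff 2 \<xi> / fact 2 * (s - t)\<^sup>2"
      by (rule Taylor[of 2 diff g "t - \<eta>" "t + \<eta>" t s]) (use D s False \<eta> in \<open>auto simp: diff_def\<close>)
    then obtain \<xi> where \<xi>: "(if s < t then s < \<xi> \<and> \<xi> < t else t < \<xi> \<and> \<xi> < s)"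
      and taylor: "g s = (\<Sum>m<2. diff m t / fact m * (s - t) ^ m) + diff 2 \<xi> / fact 2 * (s - t)\<^sup>2"
      by blast
    have "\<bar>\<xi> - t\<bar> < \<eta>" using \<xi> s by (auto split: if_splits)
    hence "g'' \<xi> \<le> X" using \<eta>1(2)[of \<xi>] \<eta> by (simp add: dist_real_def)
    hence "g'' \<xi> / 2 * (s - t)\<^sup>2 \<le> X / 2 * (s - t)\<^sup>2" by (intro mult_right_mono) auto
    thus ?thesis using taylor by (simp add: diff_def numeral_2_eq_2)
  qed simp
  thus ?thesis using \<eta> by blast
qed

lemma root3_less_iff: "root 3 x < y \<longleftrightarrow> x < y ^ 3"
  by (metis odd_real_root_power_cancel odd_numeral real_root_less_iff zero_less_numeral)

lemma less_root3_iff: "y < root 3 x \<longleftrightarrow> y ^ 3 < x"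
  by (metis odd_real_root_power_cancel odd_numeral real_root_less_iff zero_less_numeral)

lemma has_real_derivative_root3_affine:
  assumes "A + 3 * k * s \<noteq> 0"
  shows "((\<lambda>s. root 3 (A + 3 * k * s)) has_real_derivative k / root 3 (A + 3 * k * s) ^ 2) (at s)"
proof -
  have "(root 3 has_real_derivative inverse (real 3 * root 3 (A + 3 * k * s) ^ (3 - Suc 0)))
      (at (A + 3 * k * s))"
    by (rule DERIV_real_root_generic) (use assms in auto)
  hence "((\<lambda>s. root 3 (A + 3 * k * s)) has_real_derivative
      inverse (real 3 * root 3 (A + 3 * k * s) ^ (3 - Suc 0)) * (3 * k)) (at s)"
    by (rule DERIV_chain2[where f = "root 3" and g = "\<lambda>s. A + 3 * k * s"])
      (auto intro!: derivative_eq_intros)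
  moreover have "inverse (real 3 * root 3 (A + 3 * k * s) ^ (3 - Suc 0)) * (3 * k)
      = k / root 3 (A + 3 * k * s) ^ 2"
    by (simp add: field_simps power2_eq_square)
  ultimately show ?thesis by simp
qed

text \<open>The solutions of \<open>(w')\<^sup>2 w'' = k\<close> with \<open>w' = (A + 3 k s)\<^sup>1\<^sup>/\<^sup>3\<close>; they are the comparison
  functions for the one-dimensional equation.\<close>

definition cube_root_profile :: "real \<Rightarrow> real \<Rightarrow> real \<Rightarrow> real" where
  "cube_root_profile A k s = root 3 (A + 3 * k * s) ^ 4 / (4 * k)"

lemma cube_root_profile_has_derivative:
  assumes "A + 3 * k * s \<noteq> 0" "k \<noteq> 0"
  shows "(cube_root_profile A k has_real_derivative root 3 (A + 3 * k * s)) (at s)"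
proof -
  let ?r = "root 3 (A + 3 * k * s)"
  have "?r \<noteq> 0" using assms by simp
  moreover have "(cube_root_profile A k has_real_derivative
      of_nat 4 * ((k / ?r\<^sup>2) * ?r ^ (4 - Suc 0)) / (4 * k)) (at s)"
    unfolding cube_root_profile_def
    by (rule DERIV_cdivide, rule DERIV_power[OF has_real_derivative_root3_affine[OF assms(1)]])
  ultimately show ?thesis
    using assms(2) by (simp add: field_simps power2_eq_square power3_eq_cube)
qed

lemma cube_root_profile_upper_bound:
  assumes k: "k \<noteq> 0" and nz: "A + 3 * k * t \<noteq> 0" and X: "k / root 3 (A + 3 * k * t) ^ 2 < X"
  shows "\<exists>\<eta>>0. \<forall>s. \<bar>s - t\<bar> < \<eta> \<longrightarrow> cube_root_profile A k s
           \<le> cube_root_profile A k t + root 3 (A + 3 * k * t) * (s - t) + X / 2 * (s - t)\<^sup>2"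
proof -
  have "isCont (\<lambda>s. A + 3 * k * s) t" by (intro continuous_intros)
  then obtain \<eta>0 where \<eta>0: "\<eta>0 > 0"
    "\<And>s. dist s t < \<eta>0 \<Longrightarrow> dist (A + 3 * k * s) (A + 3 * k * t) < \<bar>A + 3 * k * t\<bar>"
    using nz unfolding continuous_at_eps_delta by (meson zero_less_abs_iff)
  have nz': "A + 3 * k * s \<noteq> 0" if "\<bar>s - t\<bar> < \<eta>0" for s
    using \<eta>0(2)[of s] that by (auto simp: dist_real_def)
  have "isCont (\<lambda>s. k / root 3 (A + 3 * k * s) ^ 2) t"
    using nz by (intro continuous_intros isCont_o2[OF _ isCont_real_root]) auto
  thus ?thesis
    by (intro second_order_upper_bound[where g' = "\<lambda>s. root 3 (A + 3 * k * s)"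
          and g'' = "\<lambda>s. k / root 3 (A + 3 * k * s) ^ 2", OF \<eta>0(1) _ _ _ X]
        cube_root_profile_has_derivative[OF nz' k] has_real_derivative_root3_affine[OF nz'])
qed

lemma interior_max_of_derivative_signs:
  fixes h :: "real \<Rightarrow> real"
  assumes st: "s0 < t0" and cont: "continuous_on {s0..t0} h"
    and d0: "(h has_real_derivative d0) (at s0)" "d0 > 0"
    and d1: "(h has_real_derivative d1) (at t0)" "d1 < 0"
  obtains t where "t \<in> {s0<..<t0}" "\<And>s. s \<in> {s0..t0} \<Longrightarrow> h s \<le> h t"
proof -
  obtain t where t: "t \<in> {s0..t0}" and max: "\<And>s. s \<in> {s0..t0} \<Longrightarrow> h s \<le> h t"
    using continuous_attains_sup[OF compact_Icc _ cont] st by auto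
  obtain e0 where e0: "e0 > 0" "\<And>e. e > 0 \<Longrightarrow> e < e0 \<Longrightarrow> h s0 < h (s0 + e)"
    using DERIV_pos_inc_right[OF d0] by blast
  define e where "e = min (e0 / 2) (t0 - s0)"
  have "h s0 < h (s0 + e)" "s0 + e \<in> {s0..t0}" using e0 st by (auto simp: e_def)
  hence "t \<noteq> s0" using max[of "s0 + e"] by auto
  obtain e1 where e1: "e1 > 0" "\<And>e. e > 0 \<Longrightarrow> e < e1 \<Longrightarrow> h t0 < h (t0 - e)"
    using DERIV_neg_dec_left[OF d1] by blast
  define e' where "e' = min (e1 / 2) (t0 - s0)"
  have "h t0 < h (t0 - e')" "t0 - e' \<in> {s0..t0}" using e1 st by (auto simp: e'_def)
  hence "t \<noteq> t0" using max[of "t0 - e'"] by auto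
  with \<open>t \<noteq> s0\<close> t have "t \<in> {s0<..<t0}" by auto
  thus ?thesis using that max by blast
qed

text \<open>The difference of \<open>f\<close> and the profile has an interior maximum, as its derivative changes
  sign from positive to negative.\<close>

lemma touch_above_of_crossing_cube_root:
  assumes deriv: "\<And>s. s \<in> {s0..t0} \<Longrightarrow> (f has_real_derivative v s) (at s)"
    and st: "s0 < t0" and I: "{s0..t0} \<subseteq> I" and k: "k \<noteq> 0"
    and nz: "\<And>s. s \<in> {s0..t0} \<Longrightarrow> A + 3 * k * s \<noteq> 0"
    and v0: "root 3 (A + 3 * k * s0) < v s0" and v1: "v t0 < root 3 (A + 3 * k * t0)"
  obtains t where "t \<in> {s0<..<t0}"
    "\<And>X. k / root 3 (A + 3 * k * t) ^ 2 < X \<Longrightarrow> touch_above f I t (root 3 (A + 3 * k * t)) X"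
proof -
  define h where "h s = f s - cube_root_profile A k s" for s
  have dh: "(h has_real_derivative (v s - root 3 (A + 3 * k * s))) (at s)" if "s \<in> {s0..t0}" for s
    unfolding h_def by (rule DERIV_diff[OF deriv[OF that] cube_root_profile_has_derivative[OF nz[OF that] k]])
  have "continuous_on {s0..t0} h"
    using dh by (meson DERIV_isCont continuous_at_imp_continuous_on)
  moreover have "s0 \<in> {s0..t0}" "t0 \<in> {s0..t0}" using st by auto
  ultimately obtain t where t: "t \<in> {s0<..<t0}" and max: "\<And>s. s \<in> {s0..t0} \<Longrightarrow> h s \<le> h t"
    using interior_max_of_derivative_signs[OF st _ dh[of s0] _ dh[of t0]] v0 v1 by auto
  show ?thesis
  proof (rule that[OF t])
    fix X assume X: "k / root 3 (A + 3 * k * t) ^ 2 < X"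
    obtain \<eta> where "\<eta> > 0" "\<And>s. \<bar>s - t\<bar> < \<eta> \<Longrightarrow> cube_root_profile A k s
        \<le> cube_root_profile A k t + root 3 (A + 3 * k * t) * (s - t) + X / 2 * (s - t)\<^sup>2"
      using cube_root_profile_upper_bound[OF k nz X] t by auto
    thus "touch_above f I t (root 3 (A + 3 * k * t)) X"
      using t I max by (intro touch_above_of_max[where g = "cube_root_profile A k"]) (auto simp: h_def)
  qed
qed

lemma convex_combination_nonzero:
  fixes P Q u :: real
  assumes PQ: "P * Q > 0" and u: "0 \<le> u" "u \<le> 1"
  shows "P + u * (Q - P) \<noteq> 0"
proof -
  have eq: "P + u * (Q - P) = (1 - u) * P + u * Q" by (simp add: algebra_simps)
  consider "0 < P" "0 < Q" | "P < 0" "Q < 0" using PQ by (auto simp: zero_less_mult_iff)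
  thus ?thesis
  proof cases
    case 1
    have "(1 - u) * min P Q \<le> (1 - u) * P" "u * min P Q \<le> u * Q" using u by (simp_all add: mult_left_mono)
    hence "min P Q \<le> (1 - u) * P + u * Q" by (simp add: algebra_simps)
    thus ?thesis using 1 eq by linarith
  next
    case 2
    have "(1 - u) * P \<le> (1 - u) * max P Q" "u * Q \<le> u * max P Q" using u by (simp_all add: mult_left_mono)
    hence "(1 - u) * P + u * Q \<le> max P Q" by (simp add: algebra_simps)
    thus ?thesis using 2 eq by linarith
  qed
qed

lemma perturbed_product_pos:
  fixes a b e1 e2 :: real
  assumes "a * b > 0" "\<bar>e1\<bar> < \<bar>a\<bar>" "\<bar>e2\<bar> < \<bar>b\<bar>"
  shows "(a + e1) * (b + e2) > 0"
  using assms unfolding zero_less_mult_iff by (auto simp: abs_if split: if_splits)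

text \<open>An affine function through slightly perturbed values of \<open>v\<^sup>3\<close> at the endpoints: it keeps
  the common sign of \<open>v\<^sub>0\<^sup>3, v\<^sub>1\<^sup>3\<close> on \<open>[s\<^sub>0, t\<^sub>0]\<close>, and its slope \<open>3k\<close> stays below \<open>3c\<close>.\<close>

lemma cube_root_barrier:
  fixes v0 v1 s0 t0 c :: real
  assumes st: "s0 < t0" and sign: "v0 * v1 > 0" and gap: "v1 ^ 3 - v0 ^ 3 < 3 * c * (t0 - s0)"
  obtains A k where "k \<noteq> 0" "k < c" "\<And>s. s \<in> {s0..t0} \<Longrightarrow> A + 3 * k * s \<noteq> 0"
    "root 3 (A + 3 * k * s0) < v0" "v1 < root 3 (A + 3 * k * t0)"
proof -
  define D where "D = v1 ^ 3 - v0 ^ 3"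
  define m where "m = min \<bar>v0 ^ 3\<bar> \<bar>v1 ^ 3\<bar>"
  have m: "m > 0" using sign by (auto simp: m_def)
  obtain \<epsilon> where \<epsilon>: "0 < \<epsilon>" "\<epsilon> < m" "D + 2 * \<epsilon> < 3 * c * (t0 - s0)" "D + 2 * \<epsilon> \<noteq> 0"
  proof -
    define e where "e = min m (3 * c * (t0 - s0) - D) / 3"
    have "3 * e \<le> m" "3 * e \<le> 3 * c * (t0 - s0) - D" "0 < 3 * e" using m gap by (auto simp: e_def D_def)
    hence e: "0 < e" "e < m" "D + 2 * e < 3 * c * (t0 - s0)" by linarith+
    show ?thesis
    proof (cases "D + 2 * e = 0")
      case True
      show ?thesis by (rule that[of "e / 2"]) (use e True in auto)
    qed (use e that in blast)
  qed
  define P Q where "P = v0 ^ 3 - \<epsilon>" and "Q = v1 ^ 3 + \<epsilon>"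
  have "v0 ^ 3 * v1 ^ 3 > 0" using sign by (metis power_mult_distrib zero_less_power odd_numeral
      zero_less_power_eq)
  hence PQ: "P * Q > 0"
    unfolding P_def Q_def using perturbed_product_pos[of "v0 ^ 3" "v1 ^ 3" "- \<epsilon>" \<epsilon>] \<epsilon> m
    by (simp add: m_def)
  define k where "k = (Q - P) / (3 * (t0 - s0))"
  define A where "A = P - 3 * k * s0"
  have k3: "3 * k = (Q - P) / (t0 - s0)" using st by (simp add: k_def field_simps)
  have affine: "A + 3 * k * s = P + (s - s0) / (t0 - s0) * (Q - P)" for s
  proof -
    have "A + 3 * k * s = P + 3 * k * (s - s0)" by (simp add: A_def algebra_simps)
    thus ?thesis unfolding k3 by simp
  qed
  have "Q - P = D + 2 * \<epsilon>" by (simp add: P_def Q_def D_def)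
  hence "k \<noteq> 0" "k < c" using \<epsilon> st by (simp_all add: k_def field_simps)
  moreover have "A + 3 * k * s \<noteq> 0" if "s \<in> {s0..t0}" for s
    unfolding affine using that st by (intro convex_combination_nonzero[OF PQ]) auto
  moreover have "root 3 (A + 3 * k * s0) < v0" "v1 < root 3 (A + 3 * k * t0)"
    unfolding affine using st \<epsilon>(1) by (simp_all add: root3_less_iff less_root3_iff P_def Q_def)
  ultimately show ?thesis using that by blast
qed

text \<open>Comparison with the cube-root profile of the barrier, whose \<open>k\<close> is below \<open>c\<close>.\<close>

lemma cube_increment_ge:
  assumes sub: "viscosity_subsolution c f I"
    and deriv: "\<And>s. s \<in> {s0..t0} \<Longrightarrow> (f has_real_derivative v s) (at s)"
    and st: "s0 < t0" and I: "{s0..t0} \<subseteq> I" and sign: "v s0 * v t0 > 0"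
  shows "3 * c * (t0 - s0) \<le> v t0 ^ 3 - v s0 ^ 3"
proof (rule ccontr)
  assume "\<not> ?thesis"
  hence "v t0 ^ 3 - v s0 ^ 3 < 3 * c * (t0 - s0)" by simp
  then obtain A k where k: "k \<noteq> 0" "k < c" and nz: "\<And>s. s \<in> {s0..t0} \<Longrightarrow> A + 3 * k * s \<noteq> 0"
    and "root 3 (A + 3 * k * s0) < v s0" "v t0 < root 3 (A + 3 * k * t0)"
    using cube_root_barrier[OF st sign] by blast
  then obtain t where t: "t \<in> {s0<..<t0}"
    and touch: "\<And>X. k / root 3 (A + 3 * k * t) ^ 2 < X \<Longrightarrow> touch_above f I t (root 3 (A + 3 * k * t)) X"
    using touch_above_of_crossing_cube_root[OF deriv st I k(1) nz] by blast
  define r where "r = root 3 (A + 3 * k * t)"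
  have r: "r\<^sup>2 > 0" using nz[of t] t by (simp add: r_def)
  have "touch_above f I t r (k / r\<^sup>2 + (c - k) / (2 * r\<^sup>2))"
    unfolding r_def using touch k r by (simp add: r_def)
  hence "c \<le> r\<^sup>2 * (k / r\<^sup>2 + (c - k) / (2 * r\<^sup>2))" using sub by (simp add: viscosity_subsolution_def)
  also have "\<dots> = k + (c - k) / 2" using r by (simp add: field_simps)
  finally show False using k by (simp add: field_simps)
qed

lemma cube_increment_le:
  assumes sup: "viscosity_supersolution c f I"
    and deriv: "\<And>s. s \<in> {s0..t0} \<Longrightarrow> (f has_real_derivative v s) (at s)"
    and st: "s0 < t0" and I: "{s0..t0} \<subseteq> I" and sign: "v s0 * v t0 > 0"
  shows "v t0 ^ 3 - v s0 ^ 3 \<le> 3 * c * (t0 - s0)"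
proof -
  have "viscosity_subsolution (- c) (\<lambda>s. - f s) I"
    using sup by (simp add: viscosity_subsolution_uminus)
  moreover have "((\<lambda>s. - f s) has_real_derivative - v s) (at s)" if "s \<in> {s0..t0}" for s
    using deriv[OF that] by (rule DERIV_minus)
  ultimately have "3 * (- c) * (t0 - s0) \<le> (- v t0) ^ 3 - (- v s0) ^ 3"
    using st I sign by (intro cube_increment_ge) auto
  thus ?thesis by simp
qed

section \<open>The one-dimensional equation\<close>

lemma isCont_nonzero_same_sign:
  fixes v :: "real \<Rightarrow> real"
  assumes "s0 \<le> t0" and cont: "\<And>s. s \<in> {s0..t0} \<Longrightarrow> isCont v s"
    and nz: "\<And>s. s \<in> {s0..t0} \<Longrightarrow> v s \<noteq> 0"
  shows "v s0 * v t0 > 0"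
proof (rule ccontr)
  assume "\<not> ?thesis"
  hence "v s0 \<le> 0 \<and> 0 \<le> v t0 \<or> v t0 \<le> 0 \<and> 0 \<le> v s0"
    unfolding not_less mult_le_0_iff by auto
  moreover have "\<forall>x. s0 \<le> x \<and> x \<le> t0 \<longrightarrow> isCont v x" using cont by auto
  ultimately obtain x where "s0 \<le> x" "x \<le> t0" "v x = 0"
    using IVT[of v s0 0 t0] IVT2[of v t0 0 s0] \<open>s0 \<le> t0\<close> by blast
  thus False using nz by auto
qed

lemma isCont_eq_from_left:
  fixes G :: "real \<Rightarrow> real"
  assumes cont: "isCont G z" and "s < z" and const: "\<And>x. s \<le> x \<Longrightarrow> x < z \<Longrightarrow> G x = G s"
  shows "G z = G s"
proof -
  have "(G \<longlongrightarrow> G z) (at_left z)"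
    using cont unfolding isCont_def by (rule tendsto_within_subset) simp
  moreover have "\<forall>\<^sub>F x in at_left z. G x = G s"
    using eventually_at_left_real[OF \<open>s < z\<close>] by eventually_elim (auto intro: const)
  ultimately have "((\<lambda>_. G s) \<longlongrightarrow> G z) (at_left z)" by (rule Lim_transform_eventually)
  from tendsto_unique[OF trivial_limit_at_left_real this tendsto_const] show ?thesis by simp
qed

lemma isCont_eq_from_right:
  fixes G :: "real \<Rightarrow> real"
  assumes cont: "isCont G z" and "z < t" and const: "\<And>x. z < x \<Longrightarrow> x \<le> t \<Longrightarrow> G x = G t"
  shows "G z = G t"
proof -
  have "(G \<longlongrightarrow> G z) (at_right z)"
    using cont unfolding isCont_def by (rule tendsto_within_subset) simp
  moreover have "\<forall>\<^sub>F x in at_right z. G x = G t"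
    using eventually_at_right_real[OF \<open>z < t\<close>] by eventually_elim (auto intro: const)
  ultimately have "((\<lambda>_. G t) \<longlongrightarrow> G z) (at_right z)" by (rule Lim_transform_eventually)
  from tendsto_unique[OF trivial_limit_at_right_real this tendsto_const] show ?thesis by simp
qed

lemma continuous_eq_across_point:
  fixes G :: "real \<Rightarrow> real"
  assumes cont: "\<And>x. x \<in> {a<..<b} \<Longrightarrow> isCont G x"
    and uniq: "\<And>x y. x \<in> Z \<Longrightarrow> y \<in> Z \<Longrightarrow> x = y"
    and step: "\<And>x y. a < x \<Longrightarrow> x < y \<Longrightarrow> y < b \<Longrightarrow> {x..y} \<inter> Z = {} \<Longrightarrow> G x = G y"
    and st: "a < s" "s < t" "t < b"
  shows "G s = G t"
proof (cases "{s..t} \<inter> Z = {}")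
  case False
  then obtain z where z: "z \<in> {s..t}" "z \<in> Z" by blast
  have off_z: "{x..y} \<inter> Z = {}" if "x \<in> {s..t}" "y \<in> {s..t}" "z \<notin> {x..y}" for x y
    using that uniq[OF z(2)] by blast
  have "G z = G s"
  proof (cases "s = z")
    case False
    show ?thesis
    proof (rule isCont_eq_from_left[OF cont])
      show "z \<in> {a<..<b}" "s < z" using z st False by auto
      fix x assume "s \<le> x" "x < z"
      thus "G x = G s" using z st off_z[of s x] step[of s x] by (cases "s = x") auto
    qed
  qed simp
  moreover have "G z = G t"
  proof (cases "z = t")
    case False
    show ?thesis
    proof (rule isCont_eq_from_right[OF cont])
      show "z \<in> {a<..<b}" "z < t" using z st False by auto
      fix x assume "z < x" "x \<le> t"
      thus "G x = G t" using z st off_z[of x t] step[of x t] by (cases "x = t") auto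
    qed
  qed simp
  ultimately show ?thesis by simp
next
  case True
  thus ?thesis using st step by blast
qed

lemma viscosity_subsolution_pos_no_two_zeros:
  assumes sub: "viscosity_subsolution c f {a<..<b}" and c: "c > 0"
    and deriv: "\<And>s. s \<in> {a<..<b} \<Longrightarrow> (f has_real_derivative v s) (at s)"
    and mono: "\<And>s t. a < s \<Longrightarrow> s \<le> t \<Longrightarrow> t < b \<Longrightarrow> v s \<le> v t"
    and z: "a < z1" "z1 < z2" "z2 < b" "v z1 = 0" "v z2 = 0"
  shows False
proof -
  have "continuous_on {z1..z2} f"
    using z by (intro continuous_at_imp_continuous_on ballI DERIV_isCont[OF deriv]) auto
  moreover have "(f has_real_derivative 0) (at x)" if "z1 < x" "x < z2" for x
  proof -
    have "v z1 \<le> v x" "v x \<le> v z2" using mono[of z1 x] mono[of x z2] that z by auto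
    thus ?thesis using deriv[of x] that z by auto
  qed
  ultimately have flat: "f x = f z1" if "z1 \<le> x" "x \<le> z2" for x
    by (rule DERIV_isconst2[OF \<open>z1 < z2\<close>]) (use that in auto)
  define m where "m = (z1 + z2) / 2"
  have "z1 < m" "m < z2" using z by (auto simp: m_def)
  moreover have "f s - 0 \<le> f m - 0" if "s \<in> {z1..z2}" for s
    using flat[of s] flat[of m] that \<open>z1 < m\<close> \<open>m < z2\<close> by simp
  ultimately have "touch_above f {a<..<b} m 0 0"
    using z by (intro touch_above_of_max[where g = "\<lambda>_. 0" and \<eta> = 1]) auto
  hence "c \<le> 0\<^sup>2 * 0" using sub unfolding viscosity_subsolution_def by blast
  thus False using c by simp
qed

lemma viscosity_solution_cube_increment:
  assumes sub: "viscosity_subsolution c f I" and sup: "viscosity_supersolution c f I"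
    and deriv: "\<And>s. s \<in> {s0..t0} \<Longrightarrow> (f has_real_derivative v s) (at s)"
    and cont: "\<And>s. s \<in> {s0..t0} \<Longrightarrow> isCont v s" and nz: "\<And>s. s \<in> {s0..t0} \<Longrightarrow> v s \<noteq> 0"
    and st: "s0 < t0" and I: "{s0..t0} \<subseteq> I"
  shows "v t0 ^ 3 - v s0 ^ 3 = 3 * c * (t0 - s0)"
proof -
  have "v s0 * v t0 > 0" using st cont nz by (intro isCont_nonzero_same_sign) auto
  thus ?thesis using cube_increment_ge[OF sub deriv st I] cube_increment_le[OF sup deriv st I] by simp
qed

text \<open>For \<open>c > 0\<close> the derivative vanishes at most once, and \<open>(f')\<^sup>3 - 3cs\<close> is constant between
  its zeros by comparison and across a zero by continuity.\<close>

lemma viscosity_solution_pos_cube_affine: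
  assumes sub: "viscosity_subsolution c f {a<..<b}" and sup: "viscosity_supersolution c f {a<..<b}"
    and cont: "continuous_on {a<..<b} f" and c: "c > 0"
  shows "\<exists>v K. \<forall>s\<in>{a<..<b}. (f has_real_derivative v s) (at s) \<and> v s ^ 3 = K + 3 * c * s"
proof -
  have "viscosity_subsolution 0 f {a<..<b}" using c by (intro viscosity_subsolution_mono[OF sub]) simp
  hence cv: "convex_on {a<..<b} f" using cont by (rule viscosity_subsolution_zero_convex_on)
  define v where "v = right_deriv f b"
  have deriv: "\<And>s. s \<in> {a<..<b} \<Longrightarrow> (f has_real_derivative v s) (at s)"
    and vc: "\<And>s. s \<in> {a<..<b} \<Longrightarrow> isCont v s"
    and mono: "\<And>s t. a < s \<Longrightarrow> s \<le> t \<Longrightarrow> t < b \<Longrightarrow> v s \<le> v t"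
    unfolding v_def using convex_supersolution_has_derivative[OF cv sup] right_deriv_isCont[OF cv sup]
      right_deriv_mono[OF cv sup] by auto
  define G where "G s = v s ^ 3 - 3 * c * s" for s
  have G: "G s = G t" if "a < s" "s < t" "t < b" for s t
  proof (rule continuous_eq_across_point[where Z = "{z \<in> {a<..<b}. v z = 0}", OF _ _ _ that])
    show "isCont G x" if "x \<in> {a<..<b}" for x
      unfolding G_def using vc[OF that] by (intro continuous_intros)
    show "x = y" if "x \<in> {z \<in> {a<..<b}. v z = 0}" "y \<in> {z \<in> {a<..<b}. v z = 0}" for x y
    proof (rule ccontr)
      assume "x \<noteq> y"
      hence "x < y \<or> y < x" by linarith
      thus False
        using viscosity_subsolution_pos_no_two_zeros[OF sub c deriv mono, of x y]
          viscosity_subsolution_pos_no_two_zeros[OF sub c deriv mono, of y x] that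
        by auto
    qed
    fix x y assume xy: "a < x" "x < y" "y < b" "{x..y} \<inter> {z \<in> {a<..<b}. v z = 0} = {}"
    hence "{x..y} \<subseteq> {a<..<b}" by auto
    hence "v y ^ 3 - v x ^ 3 = 3 * c * (y - x)"
      using xy deriv vc by (intro viscosity_solution_cube_increment[OF sub sup]) auto
    thus "G x = G y" unfolding G_def by (simp add: algebra_simps)
  qed
  define m where "m = (a + b) / 2"
  have "v s ^ 3 = G m + 3 * c * s" if s: "s \<in> {a<..<b}" for s
  proof -
    have "a < m" "m < b" using s by (auto simp: m_def field_simps)
    consider "s < m" | "s = m" | "m < s" by linarith
    hence "G s = G m"
    proof cases
      case 1
      thus ?thesis using G[of s m] s \<open>m < b\<close> by auto
    next
      case 3
      thus ?thesis using G[of m s] s \<open>a < m\<close> by auto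
    qed simp
    thus ?thesis by (simp add: G_def)
  qed
  thus ?thesis using deriv by (intro exI[of _ v] exI[of _ "G m"]) simp
qed

lemma viscosity_solution_zero_derivative_const:
  assumes sub: "viscosity_subsolution 0 f {a<..<b}" and sup: "viscosity_supersolution 0 f {a<..<b}"
    and cont: "continuous_on {a<..<b} f"
  shows "\<exists>p. \<forall>s\<in>{a<..<b}. (f has_real_derivative p) (at s)"
proof -
  have cv: "convex_on {a<..<b} f" using sub cont by (rule viscosity_subsolution_zero_convex_on)
  have sub': "viscosity_subsolution 0 (\<lambda>s. - f s) {a<..<b}"
    and sup': "viscosity_supersolution 0 (\<lambda>s. - f s) {a<..<b}"
    using sub sup by (simp_all add: viscosity_subsolution_uminus viscosity_supersolution_uminus)
  have "continuous_on {a<..<b} (\<lambda>s. - f s)" using cont by (intro continuous_intros)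
  hence cv': "convex_on {a<..<b} (\<lambda>s. - f s)" using sub' by (intro viscosity_subsolution_zero_convex_on)
  define v w where "v = right_deriv f b" and "w = right_deriv (\<lambda>s. - f s) b"
  have deriv: "\<And>s. s \<in> {a<..<b} \<Longrightarrow> (f has_real_derivative v s) (at s)"
    and mono: "\<And>s t. a < s \<Longrightarrow> s \<le> t \<Longrightarrow> t < b \<Longrightarrow> v s \<le> v t"
    unfolding v_def using convex_supersolution_has_derivative[OF cv sup] right_deriv_mono[OF cv sup]
    by auto
  have deriv': "\<And>s. s \<in> {a<..<b} \<Longrightarrow> ((\<lambda>s. - f s) has_real_derivative w s) (at s)"
    and mono': "\<And>s t. a < s \<Longrightarrow> s \<le> t \<Longrightarrow> t < b \<Longrightarrow> w s \<le> w t"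
    unfolding w_def using convex_supersolution_has_derivative[OF cv' sup'] right_deriv_mono[OF cv' sup']
    by auto
  have neg: "w s = - v s" if "s \<in> {a<..<b}" for s
    using DERIV_unique[OF deriv'[OF that] DERIV_minus[OF deriv[OF that]]] .
  have const: "v s = v t" if "a < s" "s \<le> t" "t < b" for s t
    using mono[OF that] mono'[OF that] neg[of s] neg[of t] that by auto
  have "(f has_real_derivative v ((a + b) / 2)) (at s)" if s: "s \<in> {a<..<b}" for s
  proof -
    have "a < (a + b) / 2" "(a + b) / 2 < b" using s by (auto simp: field_simps)
    hence "v s = v ((a + b) / 2)"
      using s by (cases "s \<le> (a + b) / 2") (auto intro: const const[symmetric])
    thus ?thesis using deriv[OF s] by simp
  qed
  thus ?thesis by blast
qed

theorem viscosity_solution_derivative_cube_affine: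
  assumes sub: "viscosity_subsolution c f {a<..<b}" and sup: "viscosity_supersolution c f {a<..<b}"
    and cont: "continuous_on {a<..<b} f"
  shows "\<exists>v K. \<forall>s\<in>{a<..<b}. (f has_real_derivative v s) (at s) \<and> v s ^ 3 = K + 3 * c * s"
proof (cases c "0::real" rule: linorder_cases)
  case less
  have "viscosity_subsolution (- c) (\<lambda>s. - f s) {a<..<b}" "viscosity_supersolution (- c) (\<lambda>s. - f s) {a<..<b}"
    using sub sup by (simp_all add: viscosity_subsolution_uminus viscosity_supersolution_uminus)
  moreover have "continuous_on {a<..<b} (\<lambda>s. - f s)" using cont by (intro continuous_intros)
  ultimately have "\<exists>v K. \<forall>s\<in>{a<..<b}. ((\<lambda>s. - f s) has_real_derivative v s) (at s) \<and>
      v s ^ 3 = K + 3 * (- c) * s"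
    using less by (intro viscosity_solution_pos_cube_affine) auto
  then obtain v K where vK: "\<forall>s\<in>{a<..<b}. ((\<lambda>s. - f s) has_real_derivative v s) (at s) \<and>
      v s ^ 3 = K + 3 * (- c) * s"
    by blast
  have "(f has_real_derivative - v s) (at s) \<and> (- v s) ^ 3 = - K + 3 * c * s" if "s \<in> {a<..<b}" for s
    using DERIV_minus[of "\<lambda>s. - f s"] vK that by auto
  thus ?thesis by (intro exI[of _ "\<lambda>s. - v s"] exI[of _ "- K"]) blast
next
  case equal
  then obtain p where "\<forall>s\<in>{a<..<b}. (f has_real_derivative p) (at s)"
    using viscosity_solution_zero_derivative_const sub sup cont by blast
  thus ?thesis using equal by (intro exI[of _ "\<lambda>_. p"] exI[of _ "p ^ 3"]) auto
qed (use viscosity_solution_pos_cube_affine assms in blast)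

lemma DERIV_const_imp_affine:
  fixes f :: "real \<Rightarrow> real"
  assumes "\<And>s. s \<in> {p<..<q} \<Longrightarrow> (f has_real_derivative d) (at s)" and "t \<in> {p<..<q}" "s \<in> {p<..<q}"
  shows "f s = f t + d * (s - t)"
proof -
  have "\<exists>c. \<forall>x\<in>{p<..<q}. f x - d * x = c"
  proof (rule has_field_derivative_zero_constant)
    fix x assume "x \<in> {p<..<q}"
    hence "((\<lambda>x. f x - d * x) has_real_derivative d - d) (at x)"
      using assms(1) by (auto intro!: derivative_eq_intros)
    thus "((\<lambda>x. f x - d * x) has_real_derivative 0) (at x within {p<..<q})"
      by (simp add: has_field_derivative_at_within)
  qed simp
  then obtain c where "\<forall>x\<in>{p<..<q}. f x - d * x = c" by blast
  hence "f s - d * s = c" "f t - d * t = c" using assms(2,3) by auto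
  thus ?thesis by (simp add: algebra_simps)
qed

lemma touch_above_of_cube_root_derivative:
  assumes deriv: "\<And>s. s \<in> {x<..<z} \<Longrightarrow> (f has_real_derivative root 3 (K + 3 * c * s)) (at s)"
    and nz: "\<And>s. s \<in> {x<..<z} \<Longrightarrow> K + 3 * c * s \<noteq> 0" and c: "c \<noteq> 0"
    and t: "t \<in> {x<..<z}" and I: "{x<..<z} \<subseteq> I" and X: "c / root 3 (K + 3 * c * t) ^ 2 < X"
  shows "touch_above f I t (root 3 (K + 3 * c * t)) X"
proof -
  let ?W = "cube_root_profile K c"
  have "((\<lambda>s. f s - ?W s) has_real_derivative 0) (at s)" if "s \<in> {x<..<z}" for s
    using DERIV_diff[OF deriv[OF that] cube_root_profile_has_derivative[OF nz[OF that] c]] by simp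
  hence const: "f s - ?W s = f t - ?W t" if "s \<in> {x<..<z}" for s
    using DERIV_const_imp_affine[of x z "\<lambda>s. f s - ?W s" 0 t s] that t by simp
  obtain \<eta> where \<eta>: "\<eta> > 0" "\<And>s. \<bar>s - t\<bar> < \<eta> \<Longrightarrow> ?W s \<le> ?W t + root 3 (K + 3 * c * t) * (s - t) + X / 2 * (s - t)\<^sup>2"
    using cube_root_profile_upper_bound[OF c nz[OF t] X] by blast
  show ?thesis
  proof (rule touch_above_of_max[where g = ?W, OF _ _ _ _ \<eta>])
    show "(x + t) / 2 < t" "t < (t + z) / 2" "{(x + t) / 2..(t + z) / 2} \<subseteq> I" using t I by auto
    show "f s - ?W s \<le> f t - ?W t" if "s \<in> {(x + t) / 2..(t + z) / 2}" for s
      using const[of s] that t by simp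
  qed
qed

text \<open>Away from the zero of \<open>f'\<close>, \<open>f\<close> is a cube-root profile up to a constant.\<close>

lemma cube_affine_touch_above_close:
  assumes deriv: "\<And>s. s \<in> {a<..<b} \<Longrightarrow> (f has_real_derivative v s) (at s)"
    and cube: "\<And>s. s \<in> {a<..<b} \<Longrightarrow> v s ^ 3 = K + 3 * c * s"
    and ab: "a < b" and \<epsilon>: "\<epsilon> > 0"
  shows "\<exists>t p X. touch_above f {a<..<b} t p X \<and> p\<^sup>2 * X < c + \<epsilon>"
proof -
  have v: "v s = root 3 (K + 3 * c * s)" if "s \<in> {a<..<b}" for s
    using cube[OF that] by (metis odd_real_root_power_cancel odd_numeral)
  define m where "m = (a + b) / 2"
  have m: "a < m" "m < b" using ab by (auto simp: m_def field_simps)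
  show ?thesis
  proof (cases "c = 0")
    case True
    have "(f has_real_derivative root 3 K) (at s)" if "s \<in> {a<..<b}" for s
      using deriv[OF that] v[OF that] True by simp
    hence "f s = f m + root 3 K * (s - m)" if "s \<in> {a<..<b}" for s
      using DERIV_const_imp_affine[of a b f "root 3 K" m s] m that by auto
    hence "touch_above f {a<..<b} m (root 3 K) 0"
      using m by (intro touch_above_of_max[where g = "\<lambda>s. f m + root 3 K * (s - m)" and \<eta> = 1
            and x = "(a + m) / 2" and z = "(m + b) / 2"]) (auto simp: field_simps)
    thus ?thesis using True \<epsilon> by (intro exI) auto
  next
    case False
    define z0 where "z0 = - K / (3 * c)"
    have affine: "K + 3 * c * s = 3 * c * (s - z0)" for s using False by (simp add: z0_def field_simps)
    obtain x z where xz: "a \<le> x" "x < z" "z \<le> b" and nz: "\<And>s. s \<in> {x<..<z} \<Longrightarrow> K + 3 * c * s \<noteq> 0"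
    proof (cases "z0 \<le> m")
      case True
      show ?thesis by (rule that[of m b]) (use True m False in \<open>auto simp: affine\<close>)
    next
      case False
      show ?thesis by (rule that[of a m]) (use False m \<open>c \<noteq> 0\<close> in \<open>auto simp: affine\<close>)
    qed
    define t where "t = (x + z) / 2"
    have t: "t \<in> {x<..<z}" using xz by (auto simp: t_def)
    define r where "r = root 3 (K + 3 * c * t)"
    have r: "r\<^sup>2 > 0" using nz[OF t] by (simp add: r_def)
    define X where "X = c / r\<^sup>2 + \<epsilon> / (2 * r\<^sup>2)"
    have "touch_above f {a<..<b} t r X"
      unfolding r_def using xz v deriv \<epsilon> r
      by (intro touch_above_of_cube_root_derivative[OF _ nz False t]) (auto simp: X_def r_def)
    moreover have "r\<^sup>2 * X < c + \<epsilon>" using r \<epsilon> by (simp add: X_def field_simps)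
    ultimately show ?thesis by blast
  qed
qed

lemma exists_touch_values_close:
  assumes cont: "continuous_on {a<..<b} f" and ab: "a < b" and \<epsilon>: "\<epsilon> > 0"
  shows "\<exists>t p X t' p' X'. touch_above f {a<..<b} t p X \<and> touch_below f {a<..<b} t' p' X' \<and>
           p\<^sup>2 * X < p'\<^sup>2 * X' + \<epsilon>"
proof (rule ccontr)
  assume "\<not> ?thesis"
  hence gap: "p'\<^sup>2 * X' + \<epsilon> \<le> p\<^sup>2 * X"
    if "touch_above f {a<..<b} t p X" "touch_below f {a<..<b} t' p' X'" for t p X t' p' X'
    using that not_le by blast
  define L where "L = {p\<^sup>2 * X | t p X. touch_below f {a<..<b} t p X}"
  have L_le: "l \<le> p\<^sup>2 * X - \<epsilon>" if up: "touch_above f {a<..<b} t p X" and "l \<in> L" for l t p X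
  proof -
    obtain t' p' X' where l: "l = p'\<^sup>2 * X'" and down: "touch_below f {a<..<b} t' p' X'"
      using \<open>l \<in> L\<close> by (auto simp: L_def)
    show ?thesis using gap[OF up down] l by simp
  qed
  obtain t0 p0 X0 where up: "touch_above f {a<..<b} t0 p0 X0" using exists_touch_above[OF cont ab] by blast
  have ne: "L \<noteq> {}" using exists_touch_below[OF cont ab] by (auto simp: L_def)
  have "bdd_above L" using L_le[OF up] by (rule bdd_aboveI)
  hence sup: "viscosity_supersolution (Sup L) f {a<..<b}"
    unfolding viscosity_supersolution_def L_def by (auto intro: cSup_upper)
  have sub: "viscosity_subsolution (Sup L + \<epsilon>) f {a<..<b}"
    unfolding viscosity_subsolution_def
  proof (intro allI impI)
    fix t p X assume "touch_above f {a<..<b} t p X"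
    hence "Sup L \<le> p\<^sup>2 * X - \<epsilon>" using L_le ne by (intro cSup_least)
    thus "Sup L + \<epsilon> \<le> p\<^sup>2 * X" by simp
  qed
  have "viscosity_subsolution (Sup L) f {a<..<b}" using \<epsilon> by (intro viscosity_subsolution_mono[OF sub]) simp
  hence "\<exists>v K. \<forall>s\<in>{a<..<b}. (f has_real_derivative v s) (at s) \<and> v s ^ 3 = K + 3 * Sup L * s"
    using sup cont by (rule viscosity_solution_derivative_cube_affine)
  then obtain v K where deriv: "\<And>s. s \<in> {a<..<b} \<Longrightarrow> (f has_real_derivative v s) (at s)"
    and cube: "\<And>s. s \<in> {a<..<b} \<Longrightarrow> v s ^ 3 = K + 3 * Sup L * s"
    by blast
  obtain t p X where "touch_above f {a<..<b} t p X" "p\<^sup>2 * X < Sup L + \<epsilon>"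
    using cube_affine_touch_above_close[OF deriv cube ab \<epsilon>] by blast
  thus False using sub unfolding viscosity_subsolution_def by (auto simp: not_le[symmetric])
qed

section \<open>Separable infinity-harmonic functions\<close>

lemma uminus_matrix_vector_mult: "(- A) *v x = - (A *v x)" for A :: "real^'n^'m"
  using matrix_vector_mult_diff_rdistrib[of 0 A x] by simp

lemma matrix_vector_mult_uminus: "A *v (- x) = - (A *v x)" for A :: "real^'n^'m"
  using matrix_vector_mult_diff_distrib[of A 0 x] by simp

lemma C2_on_uminus:
  assumes "C2_on S \<phi> g H"
  shows "C2_on S (\<lambda>x. - \<phi> x) (\<lambda>x. - g x) (\<lambda>x. - H x)"
  unfolding C2_on_def
proof (intro conjI ballI)
  fix x assume "x \<in> S"
  hence "((\<lambda>x. - \<phi> x) has_derivative (\<lambda>h. - (g x \<bullet> h))) (at x)"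
    "((\<lambda>x. - g x) has_derivative (\<lambda>h. - (H x *v h))) (at x)"
    using assms unfolding C2_on_def by (auto intro: has_derivative_minus)
  thus "((\<lambda>x. - \<phi> x) has_derivative (\<lambda>h. - g x \<bullet> h)) (at x)"
    "((\<lambda>x. - g x) has_derivative (\<lambda>h. (- H x) *v h)) (at x)"
    by (simp_all add: uminus_matrix_vector_mult)
next
  show "continuous_on S (\<lambda>x. - H x)" using assms unfolding C2_on_def by (intro continuous_intros) simp
qed

lemma inf_lap_uminus: "inf_lap (- p) (- X) = - inf_lap p X"
  by (simp add: inf_lap_def uminus_matrix_vector_mult matrix_vector_mult_uminus)

lemma inf_harmonic_uminus:
  assumes "inf_harmonic S u"
  shows "inf_harmonic S (\<lambda>x. - u x)"
proof -
  have sub: "0 \<le> inf_lap (g x0) (H x0)"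
    if "C2_on S \<phi> g H" "x0 \<in> S" "r > 0" "\<forall>x\<in>S \<inter> ball x0 r. u x - \<phi> x \<le> u x0 - \<phi> x0" for \<phi> g H x0 r
    using assms that unfolding inf_harmonic_def by blast
  have sup: "inf_lap (g x0) (H x0) \<le> 0"
    if "C2_on S \<phi> g H" "x0 \<in> S" "r > 0" "\<forall>x\<in>S \<inter> ball x0 r. u x - \<phi> x \<ge> u x0 - \<phi> x0" for \<phi> g H x0 r
    using assms that unfolding inf_harmonic_def by blast
  show ?thesis
    unfolding inf_harmonic_def
  proof (intro conjI allI impI)
    show "continuous_on S (\<lambda>x. - u x)" using assms by (intro continuous_intros) (simp add: inf_harmonic_def)
  next
    fix \<phi> g H x0
    assume "C2_on S \<phi> g H \<and> x0 \<in> S \<and> (\<exists>r>0. \<forall>x\<in>S \<inter> ball x0 r. - u x - \<phi> x \<le> - u x0 - \<phi> x0)"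
    then obtain r where "C2_on S \<phi> g H" "x0 \<in> S" "r > 0"
      and max: "\<forall>x\<in>S \<inter> ball x0 r. - u x - \<phi> x \<le> - u x0 - \<phi> x0"
      by blast
    moreover have "\<forall>x\<in>S \<inter> ball x0 r. u x - - \<phi> x \<ge> u x0 - - \<phi> x0"
      using max by (simp add: algebra_simps)
    ultimately have "inf_lap (- g x0) (- H x0) \<le> 0" by (intro sup[OF C2_on_uminus])
    thus "0 \<le> inf_lap (g x0) (H x0)" by (simp add: inf_lap_uminus)
  next
    fix \<phi> g H x0
    assume "C2_on S \<phi> g H \<and> x0 \<in> S \<and> (\<exists>r>0. \<forall>x\<in>S \<inter> ball x0 r. - u x - \<phi> x \<ge> - u x0 - \<phi> x0)"
    then obtain r where "C2_on S \<phi> g H" "x0 \<in> S" "r > 0"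
      and min: "\<forall>x\<in>S \<inter> ball x0 r. - u x - \<phi> x \<ge> - u x0 - \<phi> x0"
      by blast
    moreover have "\<forall>x\<in>S \<inter> ball x0 r. u x - - \<phi> x \<le> u x0 - - \<phi> x0"
      using min by (simp add: algebra_simps)
    ultimately have "0 \<le> inf_lap (- g x0) (- H x0)" by (intro sub[OF C2_on_uminus])
    thus "inf_lap (g x0) (H x0) \<le> 0" by (simp add: inf_lap_uminus)
  qed
qed

lemma diagonal_matrix_vector_mult:
  "(\<chi> i j. if i = j then d i else 0) *v h = (\<chi> i. d i * h $ i)" for d :: "'n::finite \<Rightarrow> real"
  by (simp add: matrix_vector_mult_def vec_eq_iff if_distrib if_distribR cong: if_cong)

lemma separable_quadratic_C2_on:
  fixes t p X :: "'n::finite \<Rightarrow> real"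
  shows "C2_on S (\<lambda>x. \<Sum>i\<in>UNIV. p i * (x $ i - t i) + X i / 2 * (x $ i - t i)\<^sup>2)
           (\<lambda>x. \<chi> i. p i + X i * (x $ i - t i)) (\<lambda>x. \<chi> i j. if i = j then X i else 0)"
  unfolding C2_on_def
proof (intro conjI ballI continuous_on_const)
  fix x :: "real^'n"
  have nth: "((\<lambda>x. x $ i) has_derivative (\<lambda>h. h $ i)) (at x)" for i
    by (rule bounded_linear_imp_has_derivative[OF bounded_linear_vec_nth])
  have "((\<lambda>x. \<Sum>i\<in>UNIV. p i * (x $ i - t i) + X i / 2 * (x $ i - t i)\<^sup>2) has_derivative
      (\<lambda>h. \<Sum>i\<in>UNIV. (p i + X i * (x $ i - t i)) * h $ i)) (at x)"
    by (rule has_derivative_sum, rule has_derivative_eq_rhs, (rule derivative_eq_intros nth refl)+)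
      (auto simp: algebra_simps power2_eq_square)
  moreover have "(\<lambda>h. \<Sum>i\<in>UNIV. (p i + X i * (x $ i - t i)) * h $ i) = (\<lambda>h. (\<chi> i. p i + X i * (x $ i - t i)) \<bullet> h)"
    by (rule ext) (simp add: inner_vec_def)
  ultimately show "((\<lambda>x. \<Sum>i\<in>UNIV. p i * (x $ i - t i) + X i / 2 * (x $ i - t i)\<^sup>2) has_derivative
      (\<lambda>h. (\<chi> i. p i + X i * (x $ i - t i)) \<bullet> h)) (at x)" by simp
  have "(\<lambda>x. \<chi> i. p i + X i * (x $ i - t i)) = (\<lambda>x. (\<chi> i. p i - X i * t i) + (\<chi> i j. if i = j then X i else 0) *v x)"
    by (rule ext) (simp add: diagonal_matrix_vector_mult vec_eq_iff algebra_simps)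
  thus "((\<lambda>x. \<chi> i. p i + X i * (x $ i - t i)) has_derivative (\<lambda>h. (\<chi> i j. if i = j then X i else 0) *v h)) (at x)"
    using has_derivative_add[OF has_derivative_const
        bounded_linear_imp_has_derivative[OF matrix_vector_mul_bounded_linear]] by simp
qed

lemma diagonal_inf_lap:
  "inf_lap (\<chi> i. p i) (\<chi> i j. if i = j then X i else 0) = (\<Sum>i\<in>UNIV. (p i)\<^sup>2 * X i)"
  by (simp add: inf_lap_def diagonal_matrix_vector_mult inner_vec_def power2_eq_square algebra_simps)

lemma separable_touch_above_sum_nonneg:
  fixes u :: "real^'n::finite \<Rightarrow> real" and \<sigma> :: "'n \<Rightarrow> real \<Rightarrow> real"
  assumes ih: "inf_harmonic S u" and sep: "\<And>x. x \<in> S \<Longrightarrow> u x = (\<Sum>i\<in>UNIV. \<sigma> i (x $ i))"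
    and box: "\<And>x. (\<And>i. x $ i \<in> I i) \<Longrightarrow> x \<in> S"
    and touch: "\<And>i. touch_above (\<sigma> i) (I i) (t i) (p i) (X i)"
  shows "0 \<le> (\<Sum>i\<in>UNIV. (p i)\<^sup>2 * X i)"
proof -
  define x0 :: "real^'n" where "x0 = (\<chi> i. t i)"
  define q where "q i s = p i * (s - t i) + X i / 2 * (s - t i)\<^sup>2" for i s
  have "\<forall>i. \<exists>\<eta>>0. \<forall>s. \<bar>s - t i\<bar> < \<eta> \<longrightarrow> \<sigma> i s \<le> \<sigma> i (t i) + q i s"
    using touch unfolding touch_above_def q_def by (simp add: add.assoc) blast
  then obtain \<eta> where \<eta>: "\<And>i. \<eta> i > 0" "\<And>i s. \<bar>s - t i\<bar> < \<eta> i \<Longrightarrow> \<sigma> i s \<le> \<sigma> i (t i) + q i s"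
    by metis
  have x0: "x0 \<in> S" using touch by (intro box) (simp add: x0_def touch_above_def)
  have "u x - (\<Sum>i\<in>UNIV. q i (x $ i)) \<le> u x0 - (\<Sum>i\<in>UNIV. q i (x0 $ i))"
    if x: "x \<in> S \<inter> ball x0 (Min (range \<eta>))" for x
  proof -
    have "\<bar>x $ i - t i\<bar> < \<eta> i" for i
    proof -
      have "\<bar>x $ i - t i\<bar> \<le> dist x x0" using dist_vec_nth_le[of x i x0] by (simp add: x0_def dist_real_def)
      also have "\<dots> < Min (range \<eta>)" using x by (simp add: dist_commute)
      also have "\<dots> \<le> \<eta> i" by simp
      finally show ?thesis .
    qed
    hence "(\<Sum>i\<in>UNIV. \<sigma> i (x $ i)) \<le> (\<Sum>i\<in>UNIV. \<sigma> i (t i) + q i (x $ i))"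
      by (intro sum_mono \<eta>(2))
    thus ?thesis using sep x x0 by (simp add: sum.distrib x0_def q_def)
  qed
  moreover have "Min (range \<eta>) > 0" using \<eta>(1) by (simp add: Min_gr_iff)
  ultimately have "0 \<le> inf_lap ((\<lambda>x. \<chi> i. p i + X i * (x $ i - t i)) x0) ((\<lambda>x. \<chi> i j. if i = j then X i else 0) x0)"
    using ih x0 separable_quadratic_C2_on[of S p t X] unfolding inf_harmonic_def q_def by blast
  thus ?thesis by (simp add: x0_def diagonal_inf_lap)
qed

lemma separable_touch_below_sum_nonpos:
  fixes u :: "real^'n::finite \<Rightarrow> real" and \<sigma> :: "'n \<Rightarrow> real \<Rightarrow> real"
  assumes ih: "inf_harmonic S u" and sep: "\<And>x. x \<in> S \<Longrightarrow> u x = (\<Sum>i\<in>UNIV. \<sigma> i (x $ i))"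
    and box: "\<And>x. (\<And>i. x $ i \<in> I i) \<Longrightarrow> x \<in> S"
    and touch: "\<And>i. touch_below (\<sigma> i) (I i) (t i) (p i) (X i)"
  shows "(\<Sum>i\<in>UNIV. (p i)\<^sup>2 * X i) \<le> 0"
proof -
  have "0 \<le> (\<Sum>i\<in>UNIV. (- p i)\<^sup>2 * - X i)"
  proof (rule separable_touch_above_sum_nonneg[OF inf_harmonic_uminus[OF ih] _ box])
    show "- u x = (\<Sum>i\<in>UNIV. - \<sigma> i (x $ i))" if "x \<in> S" for x using sep[OF that] by (simp add: sum_negf)
    show "touch_above (\<lambda>s. - \<sigma> i s) (I i) (t i) (- p i) (- X i)" for i using touch by (simp add: touch_above_uminus)
  qed
  thus ?thesis by (simp add: sum_negf)
qed

text \<open>Freezing the other coordinates at touching points whose values \<open>p\<^sup>2 X\<close> from above and below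
  are \<open>\<epsilon>\<close>-close, the two inequalities for the sums leave \<open>p'\<^sup>2 X' - p\<^sup>2 X \<le> (d - 1) \<epsilon>\<close>.\<close>

lemma separable_touch_values_ordered:
  fixes u :: "real^'n::finite \<Rightarrow> real" and \<sigma> :: "'n \<Rightarrow> real \<Rightarrow> real"
  assumes ih: "inf_harmonic S u" and sep: "\<And>x. x \<in> S \<Longrightarrow> u x = (\<Sum>i\<in>UNIV. \<sigma> i (x $ i))"
    and box: "\<And>x. (\<And>i. x $ i \<in> {a i<..<b i}) \<Longrightarrow> x \<in> S"
    and ab: "\<And>i. a i < b i" and cont: "\<And>i. continuous_on {a i<..<b i} (\<sigma> i)"
    and up: "touch_above (\<sigma> k) {a k<..<b k} t p X" and down: "touch_below (\<sigma> k) {a k<..<b k} t' p' X'"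
  shows "p'\<^sup>2 * X' \<le> p\<^sup>2 * X"
proof (rule ccontr)
  assume gap: "\<not> ?thesis"
  define \<epsilon> where "\<epsilon> = (p'\<^sup>2 * X' - p\<^sup>2 * X) / (real CARD('n) + 1)"
  have \<epsilon>: "\<epsilon> > 0" "real CARD('n) * \<epsilon> < p'\<^sup>2 * X' - p\<^sup>2 * X"
    using gap by (auto simp: \<epsilon>_def field_simps)
  have "\<forall>j. \<exists>tu pu Xu tl pl Xl. touch_above (\<sigma> j) {a j<..<b j} tu pu Xu \<and>
      touch_below (\<sigma> j) {a j<..<b j} tl pl Xl \<and> pu\<^sup>2 * Xu < pl\<^sup>2 * Xl + \<epsilon>"
    using exists_touch_values_close[OF cont ab \<epsilon>(1)] by blast
  then obtain tu pu Xu tl pl Xl where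
    U: "\<And>j. touch_above (\<sigma> j) {a j<..<b j} (tu j) (pu j) (Xu j)" and
    L: "\<And>j. touch_below (\<sigma> j) {a j<..<b j} (tl j) (pl j) (Xl j)" and
    close: "\<And>j. (pu j)\<^sup>2 * Xu j < (pl j)\<^sup>2 * Xl j + \<epsilon>"
    by metis
  have "0 \<le> (\<Sum>j\<in>UNIV. ((pu(k := p)) j)\<^sup>2 * (Xu(k := X)) j)"
    by (rule separable_touch_above_sum_nonneg[OF ih sep box, of _ "tu(k := t)"]) (use U up in auto)
  also have "\<dots> = p\<^sup>2 * X + (\<Sum>j\<in>UNIV - {k}. (pu j)\<^sup>2 * Xu j)"
    by (simp add: sum.remove[of UNIV k])
  also have "\<dots> \<le> p\<^sup>2 * X + (\<Sum>j\<in>UNIV - {k}. (pl j)\<^sup>2 * Xl j + \<epsilon>)"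
    using close by (intro add_left_mono sum_mono less_imp_le) auto
  also have "\<dots> \<le> p\<^sup>2 * X + (\<Sum>j\<in>UNIV - {k}. (pl j)\<^sup>2 * Xl j) + real CARD('n) * \<epsilon>"
    using \<epsilon>(1) card_Diff1_le[of UNIV k] by (simp add: sum.distrib)
  also have "(\<Sum>j\<in>UNIV - {k}. (pl j)\<^sup>2 * Xl j) = (\<Sum>j\<in>UNIV. ((pl(k := p')) j)\<^sup>2 * (Xl(k := X')) j) - p'\<^sup>2 * X'"
    by (simp add: sum.remove[of UNIV k])
  also have "(\<Sum>j\<in>UNIV. ((pl(k := p')) j)\<^sup>2 * (Xl(k := X')) j) \<le> 0"
    by (rule separable_touch_below_sum_nonpos[OF ih sep box, of _ "tl(k := t')"]) (use L down in auto)
  finally show False using \<epsilon>(2) by linarith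
qed

lemma separable_coordinate_cube_affine:
  fixes u :: "real^'n::finite \<Rightarrow> real" and \<sigma> :: "'n \<Rightarrow> real \<Rightarrow> real"
  assumes ih: "inf_harmonic S u" and sep: "\<And>x. x \<in> S \<Longrightarrow> u x = (\<Sum>i\<in>UNIV. \<sigma> i (x $ i))"
    and box: "\<And>x. (\<And>i. x $ i \<in> {a i<..<b i}) \<Longrightarrow> x \<in> S"
    and ab: "\<And>i. a i < b i" and cont: "\<And>i. continuous_on {a i<..<b i} (\<sigma> i)"
  shows "\<exists>v K c. \<forall>s\<in>{a k<..<b k}. (\<sigma> k has_real_derivative v s) (at s) \<and> v s ^ 3 = K + 3 * c * s"
proof -
  define L where "L = {p\<^sup>2 * X | t p X. touch_below (\<sigma> k) {a k<..<b k} t p X}"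
  have ordered: "p'\<^sup>2 * X' \<le> p\<^sup>2 * X"
    if "touch_above (\<sigma> k) {a k<..<b k} t p X" "touch_below (\<sigma> k) {a k<..<b k} t' p' X'" for t p X t' p' X'
    by (rule separable_touch_values_ordered[OF ih sep box ab cont that])
  obtain t0 p0 X0 where up: "touch_above (\<sigma> k) {a k<..<b k} t0 p0 X0"
    using exists_touch_above[OF cont ab] by blast
  have ne: "L \<noteq> {}" using exists_touch_below[OF cont ab] by (auto simp: L_def)
  have "bdd_above L" using ordered[OF up] by (intro bdd_aboveI[of _ "p0\<^sup>2 * X0"]) (auto simp: L_def)
  hence "viscosity_supersolution (Sup L) (\<sigma> k) {a k<..<b k}"
    unfolding viscosity_supersolution_def L_def by (auto intro: cSup_upper)
  moreover have "viscosity_subsolution (Sup L) (\<sigma> k) {a k<..<b k}"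
    unfolding viscosity_subsolution_def
  proof (intro allI impI)
    fix t p X assume "touch_above (\<sigma> k) {a k<..<b k} t p X"
    thus "Sup L \<le> p\<^sup>2 * X" using ordered ne by (intro cSup_least) (auto simp: L_def)
  qed
  ultimately show ?thesis using viscosity_solution_derivative_cube_affine cont by blast
qed

section \<open>Hoelder continuity of the gradient\<close>

lemma abs_diff_le_cube_diff_root:
  fixes a b :: real
  shows "\<bar>a - b\<bar> \<le> (4 * \<bar>a ^ 3 - b ^ 3\<bar>) powr (1 / 3)"
proof -
  define q where "q = a\<^sup>2 + a * b + b\<^sup>2"
  have q: "(a - b)\<^sup>2 \<le> 4 * q" "q \<ge> 0"
    using zero_le_power2[of "a + b"] zero_le_power2[of "a - b"] unfolding q_def
    by (simp_all add: power2_eq_square algebra_simps)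
  have "\<bar>a - b\<bar> ^ 3 = \<bar>a - b\<bar> * (a - b)\<^sup>2" by (simp add: power2_eq_square power3_eq_cube)
  also have "\<dots> \<le> \<bar>a - b\<bar> * (4 * q)" using q(1) by (intro mult_left_mono) auto
  also have "\<dots> = 4 * \<bar>a ^ 3 - b ^ 3\<bar>"
  proof -
    have "a ^ 3 - b ^ 3 = (a - b) * q" by (simp add: q_def power2_eq_square power3_eq_cube algebra_simps)
    thus ?thesis using q(2) by (simp add: abs_mult)
  qed
  finally have "(\<bar>a - b\<bar> ^ 3) powr (1 / 3) \<le> (4 * \<bar>a ^ 3 - b ^ 3\<bar>) powr (1 / 3)"
    by (intro powr_mono2) auto
  moreover have "(\<bar>a - b\<bar> ^ 3) powr (1 / 3) = \<bar>a - b\<bar>"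
  proof (cases "a = b")
    case False
    hence "(\<bar>a - b\<bar> ^ 3) powr (1 / 3) = (\<bar>a - b\<bar> powr 3) powr (1 / 3)" by (simp add: powr_numeral)
    also have "\<dots> = \<bar>a - b\<bar>" unfolding powr_powr by simp
    finally show ?thesis .
  qed simp
  ultimately show ?thesis by simp
qed

lemma cube_affine_hoelder:
  fixes v :: "real \<Rightarrow> real"
  assumes "v s ^ 3 = K + \<kappa> * s" "v t ^ 3 = K + \<kappa> * t"
  shows "\<bar>v s - v t\<bar> \<le> (4 * \<bar>\<kappa>\<bar>) powr (1 / 3) * \<bar>s - t\<bar> powr (1 / 3)"
proof -
  have "v s ^ 3 - v t ^ 3 = \<kappa> * (s - t)" using assms by (simp add: algebra_simps)
  hence "\<bar>v s ^ 3 - v t ^ 3\<bar> = \<bar>\<kappa>\<bar> * \<bar>s - t\<bar>" by (simp add: abs_mult)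
  thus ?thesis using abs_diff_le_cube_diff_root[of "v s" "v t"] by (simp add: powr_mult mult.assoc)
qed

lemma separable_sum_has_derivative:
  fixes \<sigma> :: "'n::finite \<Rightarrow> real \<Rightarrow> real"
  assumes "\<And>i. (\<sigma> i has_real_derivative w i) (at (x $ i))"
  shows "((\<lambda>y. \<Sum>i\<in>UNIV. \<sigma> i (y $ i)) has_derivative (\<lambda>h. (\<chi> i. w i) \<bullet> h)) (at x)"
proof -
  have "((\<lambda>y. \<sigma> i (y $ i)) has_derivative (\<lambda>h. w i * h $ i)) (at x)" for i
    using has_derivative_compose[OF bounded_linear_imp_has_derivative[OF bounded_linear_vec_nth]
        assms[of i, unfolded has_field_derivative_def]] by simp
  hence "((\<lambda>y. \<Sum>i\<in>UNIV. \<sigma> i (y $ i)) has_derivative (\<lambda>h. \<Sum>i\<in>UNIV. w i * h $ i)) (at x)"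
    by (rule has_derivative_sum)
  thus ?thesis by (simp add: inner_vec_def)
qed

lemma separable_map_hoelder:
  fixes v :: "'n::finite \<Rightarrow> real \<Rightarrow> real" and x y :: "real^'n"
  assumes hoelder: "\<And>i s t. s \<in> A \<Longrightarrow> t \<in> A \<Longrightarrow> \<bar>v i s - v i t\<bar> \<le> C i * \<bar>s - t\<bar> powr \<alpha>"
    and C: "\<And>i. C i \<ge> 0" and \<alpha>: "\<alpha> \<ge> 0" and xy: "\<And>i. x $ i \<in> A" "\<And>i. y $ i \<in> A"
  shows "norm ((\<chi> i. v i (x $ i)) - (\<chi> i. v i (y $ i))) \<le> (\<Sum>i\<in>UNIV. C i) * dist x y powr \<alpha>"
proof -
  have "norm ((\<chi> i. v i (x $ i)) - (\<chi> i. v i (y $ i))) \<le> (\<Sum>i\<in>UNIV. \<bar>v i (x $ i) - v i (y $ i)\<bar>)"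
    using norm_le_l1_cart[of "(\<chi> i. v i (x $ i)) - (\<chi> i. v i (y $ i))"] by simp
  also have "\<dots> \<le> (\<Sum>i\<in>UNIV. C i * dist x y powr \<alpha>)"
  proof (rule sum_mono)
    fix i
    have "\<bar>x $ i - y $ i\<bar> \<le> dist x y" using dist_vec_nth_le[of x i y] by (simp add: dist_real_def)
    hence "\<bar>x $ i - y $ i\<bar> powr \<alpha> \<le> dist x y powr \<alpha>" using \<alpha> by (intro powr_mono2) auto
    thus "\<bar>v i (x $ i) - v i (y $ i)\<bar> \<le> C i * dist x y powr \<alpha>"
      using hoelder[OF xy(1)[of i] xy(2)[of i], of i] C[of i] by (meson mult_left_mono order_trans)
  qed
  also have "\<dots> = (\<Sum>i\<in>UNIV. C i) * dist x y powr \<alpha>" by (simp add: sum_distrib_right)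
  finally show ?thesis .
qed

lemma separable_C1_alpha_on:
  fixes \<sigma> v :: "'n::finite \<Rightarrow> real \<Rightarrow> real" and u :: "real^'n \<Rightarrow> real"
  assumes deriv: "\<And>i s. s \<in> A \<Longrightarrow> (\<sigma> i has_real_derivative v i s) (at s)"
    and hoelder: "\<And>i s t. s \<in> A \<Longrightarrow> t \<in> A \<Longrightarrow> \<bar>v i s - v i t\<bar> \<le> C i * \<bar>s - t\<bar> powr \<alpha>"
    and C: "\<And>i. C i \<ge> 0" and \<alpha>: "\<alpha> \<ge> 0" and coords: "\<And>x i. x \<in> S \<Longrightarrow> x $ i \<in> A"
    and T: "open T" "S \<subseteq> T" and sep: "\<And>x. x \<in> T \<Longrightarrow> u x = (\<Sum>i\<in>UNIV. \<sigma> i (x $ i))"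
  shows "C1_alpha_on \<alpha> S u"
proof -
  have "(u has_derivative (\<lambda>h. (\<chi> i. v i (x $ i)) \<bullet> h)) (at x)" if x: "x \<in> S" for x
  proof -
    have "((\<lambda>y. \<Sum>i\<in>UNIV. \<sigma> i (y $ i)) has_derivative (\<lambda>h. (\<chi> i. v i (x $ i)) \<bullet> h)) (at x)"
      using deriv[OF coords[OF x]] by (rule separable_sum_has_derivative)
    thus ?thesis
      by (rule has_derivative_transform_within_open[OF _ T(1)]) (use x T(2) sep in auto)
  qed
  moreover have "norm ((\<chi> i. v i (x $ i)) - (\<chi> i. v i (y $ i))) \<le> (\<Sum>i\<in>UNIV. C i) * dist x y powr \<alpha>"
    if "x \<in> S" "y \<in> S" for x y
    using coords that by (intro separable_map_hoelder[OF hoelder C \<alpha>])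
  ultimately show ?thesis
    unfolding C1_alpha_on_def by (intro exI[of _ "\<lambda>x. \<chi> i. v i (x $ i)"] exI conjI ballI)
qed

lemma box_subset_unit_ball:
  fixes x :: "real^'n::finite"
  assumes x: "\<And>i. \<bar>x $ i\<bar> < (if i = k then 1 / 2 else 1 / (2 * real CARD('n)))"
  shows "x \<in> ball 0 1"
proof -
  let ?w = "\<lambda>i. if i = k then 1 / 2 else 1 / (2 * real CARD('n))"
  have "norm x \<le> (\<Sum>i\<in>UNIV. \<bar>x $ i\<bar>)" by (rule norm_le_l1_cart)
  also have "\<dots> < (\<Sum>i\<in>UNIV. ?w i)" using x by (intro sum_strict_mono) auto
  also have "\<dots> = 1 / 2 + real (card (UNIV - {k})) / (2 * real CARD('n))"
    by (simp add: sum.remove[of UNIV k])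
  also have "\<dots> \<le> 1 / 2 + real CARD('n) / (2 * real CARD('n))"
    using card_Diff1_le[of UNIV k] by (intro add_left_mono divide_right_mono) auto
  also have "\<dots> = 1" by simp
  finally show ?thesis by simp
qed

text \<open>Each coordinate is handled on a box in the unit ball that is long in that coordinate
  and thin in the others.\<close>

lemma unit_ball_separable_cube_affine:
  fixes u :: "real^'n::finite \<Rightarrow> real" and \<sigma> :: "'n \<Rightarrow> real \<Rightarrow> real"
  assumes ih: "inf_harmonic (ball 0 1) u" and cont: "\<And>i. continuous_on UNIV (\<sigma> i)"
    and sep: "\<And>x. x \<in> ball 0 1 \<Longrightarrow> u x = (\<Sum>i\<in>UNIV. \<sigma> i (x $ i))"
  obtains v K c where "\<And>k s. s \<in> {- 1 / 2<..<1 / 2} \<Longrightarrow>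
    (\<sigma> k has_real_derivative v k s) (at s) \<and> v k s ^ 3 = K k + 3 * c k * s"
proof -
  define w where "w k j = (if j = k then 1 / 2 else 1 / (2 * real CARD('n)))" for k j :: 'n
  have "\<exists>v K c. \<forall>s\<in>{- w k k<..<w k k}. (\<sigma> k has_real_derivative v s) (at s) \<and> v s ^ 3 = K + 3 * c * s" for k
  proof (rule separable_coordinate_cube_affine[where a = "\<lambda>j. - w k j" and b = "w k", OF ih sep])
    fix x :: "real^'n" assume x: "\<And>i. x $ i \<in> {- w k i<..<w k i}"
    show "x \<in> ball 0 1"
    proof (rule box_subset_unit_ball)
      fix i show "\<bar>x $ i\<bar> < (if i = k then 1 / 2 else 1 / (2 * real CARD('n)))"
        using x[of i] by (simp add: w_def abs_less_iff)
    qed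
  next
    show "- w k i < w k i" "continuous_on {- w k i<..<w k i} (\<sigma> i)" for i
      using continuous_on_subset[OF cont] by (auto simp: w_def)
  qed
  hence "\<forall>k. \<exists>v K c. \<forall>s\<in>{- 1 / 2<..<1 / 2}. (\<sigma> k has_real_derivative v s) (at s) \<and> v s ^ 3 = K + 3 * c * s"
    by (simp add: w_def)
  from choice[OF this] obtain v where "\<forall>k. \<exists>K c. \<forall>s\<in>{- 1 / 2<..<1 / 2}.
      (\<sigma> k has_real_derivative v k s) (at s) \<and> v k s ^ 3 = K + 3 * c * s"
    by blast
  from choice[OF this] obtain K where "\<forall>k. \<exists>c. \<forall>s\<in>{- 1 / 2<..<1 / 2}.
      (\<sigma> k has_real_derivative v k s) (at s) \<and> v k s ^ 3 = K k + 3 * c * s"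
    by blast
  from choice[OF this] show ?thesis using that by blast
qed

theorem proposition4p2:
  fixes u :: "real^'n \<Rightarrow> real" and \<sigma> :: "'n \<Rightarrow> real \<Rightarrow> real"
  assumes "inf_harmonic (ball 0 1) u"
    and "\<And>i. continuous_on UNIV (\<sigma> i)"
    and "\<And>X. X \<in> ball 0 1 \<Longrightarrow> u X = (\<Sum>i\<in>UNIV. \<sigma> i (X $ i))"
  shows "C1_alpha_on (1/3) (ball 0 (1/2)) u"
proof -
  obtain v K c where vK: "\<And>k s. s \<in> {- 1 / 2<..<1 / 2} \<Longrightarrow>
      (\<sigma> k has_real_derivative v k s) (at s) \<and> v k s ^ 3 = K k + 3 * c k * s"
    using unit_ball_separable_cube_affine[OF assms] by blast
  show ?thesis
  proof (rule separable_C1_alpha_on[where A = "{- 1 / 2<..<1 / 2}" and T = "ball 0 1"])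
    show "\<bar>v i s - v i t\<bar> \<le> (4 * \<bar>3 * c i\<bar>) powr (1 / 3) * \<bar>s - t\<bar> powr (1 / 3)"
      if "s \<in> {- 1 / 2<..<1 / 2}" "t \<in> {- 1 / 2<..<1 / 2}" for i s t
      using vK[OF that(1), of i] vK[OF that(2), of i] by (intro cube_affine_hoelder) auto
    show "x $ i \<in> {- 1 / 2<..<1 / 2}" if "x \<in> ball 0 (1 / 2)" for x :: "real^'n" and i
      using component_le_norm_cart[of x i] that by auto
  qed (use vK assms(3) in auto)
qed

end
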